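(* Let $q\in(0,1)$, $\alpha\in(-1,1)$, $\beta<1$ real, and let $0<z_1<z_2<\cdots$ be the positive zeros of $\psi_{-1}^+$. If $z_1\ge1$, then $\mu_d=0$. Otherwise $\mu_d$ is supported on the finitely many points $\pm(z_k+z_k^{-1})$ with $z_k\in(0,1)$, and \[ \mu_d=\frac{1-\beta}{1-\alpha}\sum_{0<z_k<1}\frac{z_k^2-1}{z_k^2}\frac{\psi_0^+(z_k)}{(\psi_{-1}^+)'(z_k)}\left(\delta_{z_k+z_k^{-1}}+\delta_{-(z_k+z_k^{-1})}\right). \]
   Context: $(a;q)_n:=\prod_{j=0}^{n-1}(1-aq^j)$, $n\in\mathbb{N}_0\cup\{\infty\}$. The monic polynomials $p_n$ satisfy $p_{-1}=0$, $p_0=1$, $p_{n+1}(x)=xp_n(x)-\tilde\gamma_{n-1}\tilde\gamma_np_{n-1}(x)$, $\tilde\gamma_n=(1-\alpha q^n)/(1-\beta q^n)$; $\mu$ is the Borel probability measure with $\int p_mp_n\,{\rm d}\mu=\delta_{m,n}\prod_{j=0}^{n-1}\tilde\gamma_j\tilde\gamma_{j+1}$, and $\mu_d$ is its discrete (atomic) part. For $z\ne0$ and $n\ge-1$, $\psi_n^+(z):=z^n\sum_{k\ge0}\frac{(q^{k+1}z^2;q)_\infty}{(q;q)_k}c_k(z)q^{(n+1)k}$ with $c_k(z)=\prod_{j=0}^{k-1}(\alpha(1+z^2q^{2j})-\beta q^j(1+z^2))$; this is an analytic function of $z\ne0$, and $\delta_x$ denotes the unit point mass at $x$. *)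

theory Defs
  imports "HOL-Probability.Probability"
begin

definition qpoch :: "complex \<Rightarrow> real \<Rightarrow> nat \<Rightarrow> complex" where
  "qpoch a q n = (\<Prod>j<n. 1 - a * complex_of_real q ^ j)"

definition qpoch_inf :: "complex \<Rightarrow> real \<Rightarrow> complex" where
  "qpoch_inf a q = (\<Prod>j. 1 - a * complex_of_real q ^ j)"

definition gam :: "real \<Rightarrow> real \<Rightarrow> real \<Rightarrow> nat \<Rightarrow> real" where
  "gam q \<alpha> \<beta> n = (1 - \<alpha> * q ^ n) / (1 - \<beta> * q ^ n)"

text \<open>Monic polynomials: p_0 = 1, p_1 = x (since p_{-1} = 0),
  p_{n+1} = x p_n - gam_{n-1} gam_n p_{n-1}.\<close>
fun opoly :: "real \<Rightarrow> real \<Rightarrow> real \<Rightarrow> nat \<Rightarrow> real \<Rightarrow> real" where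
  "opoly q \<alpha> \<beta> 0 x = 1"
| "opoly q \<alpha> \<beta> (Suc 0) x = x"
| "opoly q \<alpha> \<beta> (Suc (Suc n)) x =
     x * opoly q \<alpha> \<beta> (Suc n) x - gam q \<alpha> \<beta> n * gam q \<alpha> \<beta> (Suc n) * opoly q \<alpha> \<beta> n x"

definition ck :: "real \<Rightarrow> real \<Rightarrow> real \<Rightarrow> nat \<Rightarrow> complex \<Rightarrow> complex" where
  "ck q \<alpha> \<beta> k z = (\<Prod>j<k. complex_of_real \<alpha> * (1 + z^2 * complex_of_real q ^ (2*j))
                          - complex_of_real \<beta> * complex_of_real q ^ j * (1 + z^2))"

text \<open>psi_n^+(z) for integer n \<ge> -1 and complex z \<noteq> 0.\<close>
definition psi_plus :: "real \<Rightarrow> real \<Rightarrow> real \<Rightarrow> int \<Rightarrow> complex \<Rightarrow> complex" where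
  "psi_plus q \<alpha> \<beta> n z = z powi n *
     (\<Sum>k. qpoch_inf (complex_of_real q ^ (k+1) * z^2) q / qpoch (complex_of_real q) q k
            * ck q \<alpha> \<beta> k z * complex_of_real q ^ (nat (n+1) * k))"

definition discrete_part :: "real measure \<Rightarrow> real set \<Rightarrow> real" where
  "discrete_part M A = (\<Sum>\<^sub>\<infinity>x\<in>A. measure M {x})"

end

theory Submission
  imports Defs "HOL-Complex_Analysis.Complex_Analysis"
begin

text \<open>
  Set \<open>x = z + 1/z\<close>. After normalisation both the orthogonal polynomials \<open>p\<^sub>n(x)\<close> and the
  functions \<open>\<psi>\<^sup>+\<^sub>n\<^sub>-\<^sub>1(z)\<close> solve the same three-term recurrence
  \<open>\<gamma>\<^sub>n (y\<^sub>n\<^sub>+\<^sub>1 + y\<^sub>n\<^sub>-\<^sub>1) = x y\<^sub>n\<close>, and their (constant) Wronskian is a multiple of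
  \<open>\<psi>\<^sup>+\<^sub>-\<^sub>1(z)\<close>. Writing \<open>\<psi>\<^sup>+\<^sub>n(z) = z\<^sup>n \<Phi>\<^sub>n\<^sub>+\<^sub>1(z)\<close>, the entire functions \<open>\<Phi>\<^sub>m\<close> are bounded
  uniformly in \<open>m\<close> and tend to \<open>(qz\<^sup>2;q)\<^sub>\<infinity> \<noteq> 0\<close> on the closed unit disc, so for \<open>|z| < 1\<close>
  the sequence \<open>\<psi>\<^sup>+\<^sub>n(z)\<close> decays geometrically.

  The mass of \<open>\<mu>\<close> at \<open>x\<close> is the reciprocal of the Christoffel series
  \<open>\<Sigma>\<^sub>n p\<^sub>n(x)\<^sup>2 / \<parallel>p\<^sub>n\<parallel>\<^sup>2\<close> (zero if it diverges); this is shown with the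
  reproducing kernel and the Christoffel--Darboux formula. If the series converges, the
  polynomials tend to zero, which forces the Wronskian, hence \<open>\<psi>\<^sup>+\<^sub>-\<^sub>1(z)\<close>, to vanish;
  for \<open>|x| \<le> 2\<close> the point \<open>z\<close> lies on the unit circle, where \<open>\<psi>\<^sup>+\<^sub>n(z)\<close> does not
  tend to zero, so there are no atoms there. Conversely, at a zero \<open>z \<in> (0,1)\<close> the
  polynomials are proportional to \<open>\<psi>\<^sup>+\<^sub>n\<^sub>-\<^sub>1(z)\<close>, and Green's formula for the solutions at
  \<open>z\<close> and at a nearby \<open>t\<close>, in the limit \<open>t \<rightarrow> z\<close>, sums the Christoffel series in terms of
  \<open>(\<psi>\<^sup>+\<^sub>-\<^sub>1)'(z)\<close>. The zero set in \<open>(0,1)\<close> is finite because \<open>\<Phi>\<^sub>0\<close> is entire and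
  cannot vanish identically: otherwise every point of \<open>(2,\<infinity>)\<close> would be an atom.
\<close>

lemma geometric_partial_sum_le:
  fixes q :: real
  assumes "0 \<le> q" "q < 1"
  shows "(\<Sum>i<n. q ^ i) \<le> 1 / (1 - q)"
proof -
  have "(\<Sum>i<n. q ^ i) = (1 - q ^ n) / (1 - q)"
    using assms by (subst sum_gp_strict) auto
  also have "\<dots> \<le> 1 / (1 - q)"
    using assms by (intro divide_right_mono) auto
  finally show ?thesis .
qed

lemma exp_neg_le_one_minus:
  fixes x c :: real
  assumes "0 \<le> x" "x \<le> c" "c < 1"
  shows "exp (- x / (1 - c)) \<le> 1 - x"
proof -
  have x1: "x < 1" using assms by simp
  have "exp (- x / (1 - c)) \<le> exp (- x / (1 - x))"
    using assms x1 by (simp add: divide_left_mono)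
  also have "\<dots> = inverse (exp (x / (1 - x)))" by (simp add: exp_minus)
  also have "\<dots> \<le> inverse (1 + x / (1 - x))"
    using x1 assms by (intro le_imp_inverse_le exp_ge_add_one_self) (auto simp: field_simps)
  also have "\<dots> = 1 - x" using x1 by (simp add: field_simps)
  finally show ?thesis .
qed

lemma two_abs_le_AM_GM:
  fixes y t :: real
  assumes "t > 0"
  shows "2 * \<bar>y\<bar> \<le> t * y\<^sup>2 + 1 / t"
proof -
  have "0 \<le> (t * \<bar>y\<bar> - 1)\<^sup>2 / t" using assms by simp
  also have "\<dots> = t * y\<^sup>2 + 1 / t - 2 * \<bar>y\<bar>"
    using assms by (simp add: field_simps power2_eq_square)
  finally show ?thesis by simp
qed

lemma abs_le_split_bound:
  fixes y d e s t i :: real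
  assumes e: "e > 0" and s: "s > 0" and t: "t > 0"
    and i: "0 \<le> i" "\<bar>d\<bar> < e \<Longrightarrow> i = 1"
  shows "\<bar>y\<bar> \<le> (t * (d * y)\<^sup>2 + 1 / t) / (2 * e) + (s * y\<^sup>2 + i / s) / 2"
proof (cases "\<bar>d\<bar> < e")
  case True
  have "2 * \<bar>y\<bar> \<le> s * y\<^sup>2 + 1 / s" by (rule two_abs_le_AM_GM[OF s])
  then have "\<bar>y\<bar> \<le> (s * y\<^sup>2 + i / s) / 2" unfolding i(2)[OF True] by simp
  then show ?thesis using e t by (intro add_increasing) auto
next
  case False
  have "e * \<bar>y\<bar> \<le> \<bar>d * y\<bar>" using False by (simp add: abs_mult mult_right_mono)
  moreover have "2 * \<bar>d * y\<bar> \<le> t * (d * y)\<^sup>2 + 1 / t" by (rule two_abs_le_AM_GM[OF t])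
  ultimately have "\<bar>y\<bar> \<le> (t * (d * y)\<^sup>2 + 1 / t) / (2 * e)" using e by (simp add: field_simps)
  then show ?thesis using s i by (intro add_increasing2) auto
qed

lemma inj_on_plus_inverse: "inj_on (\<lambda>z::real. z + 1 / z) {0<..<1}"
proof (rule inj_onI)
  fix z t :: real
  assume zt: "z \<in> {0<..<1}" "t \<in> {0<..<1}" and eq: "z + 1 / z = t + 1 / t"
  have "(z - t) * (z * t - 1) = z * t * ((z + 1 / z) - (t + 1 / t))"
    using zt by (simp add: field_simps)
  also have "\<dots> = 0" using eq by simp
  finally have "z = t \<or> z * t = 1" by simp
  moreover have "z * t < 1 * 1" using zt by (intro mult_strict_mono) auto
  ultimately show "z = t" by auto
qed

lemma plus_inverse_gt_2_obtain:
  fixes x :: real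
  assumes "x > 2"
  obtains z where "0 < z" "z < 1" "z + 1 / z = x"
proof
  define s where "s = sqrt (x\<^sup>2 - 4)"
  have "2\<^sup>2 < x\<^sup>2" using assms by (intro power_strict_mono) auto
  then have s2: "s\<^sup>2 = x\<^sup>2 - 4" and s0: "s > 0" unfolding s_def by auto
  have "s < x"
    using power_less_imp_less_base[of s 2 x] s2 assms by simp
  then show z0: "0 < (x - s) / 2" by simp
  have "(x - 2)\<^sup>2 < s\<^sup>2" unfolding s2 using assms by (simp add: power2_eq_square algebra_simps)
  then have "x - 2 < s" using s0 by (simp add: power_less_imp_less_base)
  then show "(x - s) / 2 < 1" by simp
  have "(x - s) / 2 * ((x + s) / 2) = 1"
    using s2 by (simp add: field_simps power2_eq_square)
  then have inv: "1 / ((x - s) / 2) = (x + s) / 2" using z0 by (simp add: field_simps)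
  show "(x - s) / 2 + 1 / ((x - s) / 2) = x" unfolding inv by (simp add: field_simps)
qed

lemma plus_inverse_unit_circle_obtain:
  fixes x :: real
  assumes "\<bar>x\<bar> \<le> 2"
  obtains z :: complex where "norm z = 1" "z + 1 / z = complex_of_real x"
proof
  define z where "z = Complex (x / 2) (sqrt (4 - x\<^sup>2) / 2)"
  have "\<bar>x\<bar>\<^sup>2 \<le> 2\<^sup>2" using assms by (intro power_mono) auto
  then have x2: "x\<^sup>2 \<le> 4" by simp
  have "(norm z)\<^sup>2 = 1"
    unfolding z_def cmod_def using x2 by (simp add: power_divide add_divide_distrib[symmetric])
  then show nz: "norm z = 1"
    using norm_ge_zero[of z] by (auto simp: power2_eq_1_iff)
  have "z * cnj z = 1" using complex_norm_square[of z] nz by simp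
  moreover have "z \<noteq> 0" using nz by auto
  ultimately have "1 / z = cnj z" by (simp add: field_simps)
  then show "z + 1 / z = complex_of_real x"
    by (simp add: complex_add_cnj z_def)
qed

lemma holomorphic_on_UNIV_from_balls:
  assumes "\<And>R. f holomorphic_on ball 0 R"
  shows "f holomorphic_on UNIV"
  unfolding holomorphic_on_def
proof
  fix x :: complex
  have "f field_differentiable at x"
    using assms[of "norm x + 1"] by (rule holomorphic_on_imp_differentiable_at) auto
  then show "f field_differentiable at x within UNIV" by simp
qed

lemma infsum_eq_sum_indicator:
  fixes f :: "'a \<Rightarrow> real"
  assumes "finite S" "\<And>x. x \<notin> S \<Longrightarrow> f x = 0"
  shows "infsum f A = (\<Sum>x\<in>S. f x * indicator A x)"
proof -
  have "infsum f A = infsum f (A \<inter> S)"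
    by (rule infsum_cong_neutral) (use assms(2) in auto)
  also have "\<dots> = sum f (S \<inter> A)"
    using assms(1) by (simp add: Int_commute)
  also have "\<dots> = (\<Sum>x\<in>S. f x * indicator A x)"
    unfolding sum.inter_restrict[OF assms(1)] by (intro sum.cong) (auto simp: indicator_def)
  finally show ?thesis .
qed

section \<open>Three-term recurrences\<close>

lemma three_term_green_identity:
  fixes a b c :: "nat \<Rightarrow> 'a::field"
  assumes c: "\<And>m. c m \<noteq> 0"
    and ra: "\<And>m. c m * (a (Suc (Suc m)) + a m) = x * a (Suc m)"
    and rb: "\<And>m. c m * (b (Suc (Suc m)) + b m) = y * b (Suc m)"
  shows "(x - y) * (\<Sum>m<N. a (Suc m) * b (Suc m) / c m)
           = (a (Suc N) * b N - a N * b (Suc N)) - (a 1 * b 0 - a 0 * b 1)"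
proof (induction N)
  case (Suc N)
  have "(x - y) * (a (Suc N) * b (Suc N) / c N)
      = (x * a (Suc N)) * b (Suc N) / c N - (y * b (Suc N)) * a (Suc N) / c N"
    by (simp add: algebra_simps diff_divide_distrib)
  also have "\<dots> = b (Suc N) * (a (Suc (Suc N)) + a N) - a (Suc N) * (b (Suc (Suc N)) + b N)"
    unfolding ra[symmetric] rb[symmetric] using c[of N] by simp
  finally have step: "(x - y) * (a (Suc N) * b (Suc N) / c N)
      = b (Suc N) * (a (Suc (Suc N)) + a N) - a (Suc N) * (b (Suc (Suc N)) + b N)" .
  have "(x - y) * (\<Sum>m<Suc N. a (Suc m) * b (Suc m) / c m)
      = (x - y) * (\<Sum>m<N. a (Suc m) * b (Suc m) / c m) + (x - y) * (a (Suc N) * b (Suc N) / c N)"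
    by (simp add: distrib_left)
  also have "\<dots> = ((a (Suc N) * b N - a N * b (Suc N)) - (a 1 * b 0 - a 0 * b 1))
      + (b (Suc N) * (a (Suc (Suc N)) + a N) - a (Suc N) * (b (Suc (Suc N)) + b N))"
    unfolding Suc.IH step ..
  finally show ?case by (simp add: algebra_simps)
qed simp

lemma three_term_wronskian_const:
  fixes a b c :: "nat \<Rightarrow> 'a::field"
  assumes "\<And>m. c m \<noteq> 0"
    and "\<And>m. c m * (a (Suc (Suc m)) + a m) = x * a (Suc m)"
    and "\<And>m. c m * (b (Suc (Suc m)) + b m) = x * b (Suc m)"
  shows "a (Suc N) * b N - a N * b (Suc N) = a 1 * b 0 - a 0 * b 1"
  using three_term_green_identity[of c a x b x N, OF assms] by simp

lemma three_term_solution_unique: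
  fixes a b c :: "nat \<Rightarrow> 'a::field"
  assumes c: "\<And>m. c m \<noteq> 0"
    and ra: "\<And>m. c m * (a (Suc (Suc m)) + a m) = x * a (Suc m)"
    and rb: "\<And>m. c m * (b (Suc (Suc m)) + b m) = x * b (Suc m)"
    and "a 0 = b 0" "a 1 = b 1"
  shows "a n = b n"
proof -
  have "a n = b n \<and> a (Suc n) = b (Suc n)" for n
  proof (induction n)
    case (Suc n)
    have "a (Suc (Suc n)) = x * a (Suc n) / c n - a n" using ra[of n] c[of n] by (simp add: field_simps)
    moreover have "b (Suc (Suc n)) = x * b (Suc n) / c n - b n" using rb[of n] c[of n] by (simp add: field_simps)
    ultimately show ?case using Suc by simp
  qed (use assms in simp)
  then show ?thesis by simp
qed

section \<open>Christoffel functions of bounded Jacobi recurrences\<close>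

locale jacobi_recurrence =
  fixes c :: "nat \<Rightarrow> real" and c_lo c_hi :: real
  assumes c_lo_pos: "0 < c_lo" and c_lo_le: "c_lo \<le> c m" and c_le_hi: "c m \<le> c_hi"
begin

lemma c_pos: "0 < c m"
  using c_lo_pos c_lo_le[of m] by linarith

lemma c_nonzero [simp]: "c m \<noteq> 0"
  using c_pos[of m] by simp

text \<open>\<open>vpoly (n+1)\<close> is the \<open>n\<close>-th orthogonal polynomial, scaled so that the recurrence
  takes the symmetric form \<open>c\<^sub>m (v\<^sub>m\<^sub>+\<^sub>2 + v\<^sub>m) = x v\<^sub>m\<^sub>+\<^sub>1\<close>; \<open>vpoly 0 = 0\<close> plays the
  role of \<open>p\<^sub>-\<^sub>1\<close>.\<close>

fun vpoly :: "nat \<Rightarrow> real \<Rightarrow> real" where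
  "vpoly 0 x = 0"
| "vpoly (Suc 0) x = 1"
| "vpoly (Suc (Suc m)) x = x * vpoly (Suc m) x / c m - vpoly m x"

lemma vpoly_recurrence: "c m * (vpoly (Suc (Suc m)) x + vpoly m x) = x * vpoly (Suc m) x"
  using c_pos[of m] by (simp add: field_simps)

lemma vpoly_uminus: "vpoly n (- x) = (-1) ^ Suc n * vpoly n x"
proof -
  have "vpoly n (- x) = (-1) ^ Suc n * vpoly n x
      \<and> vpoly (Suc n) (- x) = (-1) ^ Suc (Suc n) * vpoly (Suc n) x" for n
    by (induction n) (simp_all add: field_simps)
  then show ?thesis by simp
qed

declare vpoly.simps(3) [simp del]

text \<open>\<open>h m\<close> is the squared norm of \<open>vpoly (m+1)\<close> for the orthogonality measure.\<close>

definition h :: "nat \<Rightarrow> real" where "h m = c m / c 0"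

lemma h_pos: "h m > 0"
  unfolding h_def using c_pos by simp

lemma h_nonzero [simp]: "h m \<noteq> 0"
  using h_pos[of m] by simp

lemma h_0: "h 0 = 1"
  unfolding h_def using c_pos[of 0] by simp

lemma h_le: "h m \<le> c_hi / c_lo"
  unfolding h_def using c_le_hi[of m] c_lo_le[of 0] c_pos[of m] c_lo_pos by (intro frac_le) auto

definition christoffel_kernel :: "real \<Rightarrow> nat \<Rightarrow> real \<Rightarrow> real" where
  "christoffel_kernel x0 N x = (\<Sum>m<N. vpoly (Suc m) x0 * vpoly (Suc m) x / h m)"

definition christoffel_term :: "real \<Rightarrow> nat \<Rightarrow> real" where
  "christoffel_term x0 m = (vpoly (Suc m) x0)\<^sup>2 / h m"

definition christoffel_weight :: "real \<Rightarrow> real" where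
  "christoffel_weight x0 =
     (if summable (christoffel_term x0) then 1 / suminf (christoffel_term x0) else 0)"

lemma christoffel_term_nonneg: "christoffel_term x0 m \<ge> 0"
  unfolding christoffel_term_def using h_pos[of m] by simp

lemma christoffel_term_uminus: "christoffel_term (- x) = christoffel_term x"
proof -
  have "((-1::real) ^ m)\<^sup>2 = 1" for m by (induction m) auto
  then show ?thesis unfolding christoffel_term_def[abs_def] vpoly_uminus by (simp add: power_mult_distrib)
qed

lemma christoffel_weight_uminus: "christoffel_weight (- x) = christoffel_weight x"
  unfolding christoffel_weight_def christoffel_term_uminus ..

lemma christoffel_kernel_diagonal: "christoffel_kernel x0 N x0 = (\<Sum>m<N. christoffel_term x0 m)"
  unfolding christoffel_kernel_def christoffel_term_def by (simp add: power2_eq_square)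

lemma christoffel_sum_ge_1:
  assumes "N \<ge> 1"
  shows "(\<Sum>m<N. christoffel_term x0 m) \<ge> 1"
proof -
  have "christoffel_term x0 0 \<le> (\<Sum>m<N. christoffel_term x0 m)"
    using assms by (intro member_le_sum christoffel_term_nonneg) auto
  then show ?thesis by (simp add: christoffel_term_def h_0)
qed

lemma suminf_christoffel_ge_1:
  assumes "summable (christoffel_term x0)"
  shows "suminf (christoffel_term x0) \<ge> 1"
  using christoffel_sum_ge_1[of 1 x0]
    sum_le_suminf[OF assms, of "{..<1}"] christoffel_term_nonneg by auto

lemma vpoly_sq_le: "(vpoly (Suc m) x0)\<^sup>2 \<le> c_hi / c_lo * christoffel_term x0 m"
proof -
  have "(vpoly (Suc m) x0)\<^sup>2 = h m * christoffel_term x0 m"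
    unfolding christoffel_term_def using h_pos[of m] by simp
  also have "\<dots> \<le> c_hi / c_lo * christoffel_term x0 m"
    using h_le christoffel_term_nonneg by (intro mult_right_mono)
  finally show ?thesis .
qed

lemma vpoly_LIMSEQ_0:
  assumes "summable (christoffel_term x0)"
  shows "(\<lambda>m. vpoly m x0) \<longlonglongrightarrow> 0"
proof -
  have "(\<lambda>m. (vpoly (Suc m) x0)\<^sup>2) \<longlonglongrightarrow> 0"
  proof (rule Lim_null_comparison)
    show "\<forall>\<^sub>F m in sequentially. norm ((vpoly (Suc m) x0)\<^sup>2) \<le> c_hi / c_lo * christoffel_term x0 m"
      using vpoly_sq_le by (intro always_eventually) simp
    show "(\<lambda>m. c_hi / c_lo * christoffel_term x0 m) \<longlonglongrightarrow> 0"
      by (intro tendsto_mult_right_zero summable_LIMSEQ_zero assms)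
  qed
  then have "(\<lambda>m. sqrt ((vpoly (Suc m) x0)\<^sup>2)) \<longlonglongrightarrow> sqrt 0"
    by (rule tendsto_real_sqrt)
  then have "(\<lambda>m. vpoly (Suc m) x0) \<longlonglongrightarrow> 0"
    by (simp add: tendsto_rabs_zero_iff)
  then show ?thesis
    using filterlim_sequentially_Suc[of "\<lambda>m. vpoly m x0"] by simp
qed

lemma christoffel_darboux:
  "(x - x0) * christoffel_kernel x0 N x = c 0 * (vpoly (Suc N) x * vpoly N x0 - vpoly N x * vpoly (Suc N) x0)"
proof -
  have "christoffel_kernel x0 N x = c 0 * (\<Sum>m<N. vpoly (Suc m) x * vpoly (Suc m) x0 / c m)"
    unfolding christoffel_kernel_def h_def sum_distrib_left using c_pos[of 0]
    by (intro sum.cong) (auto simp: field_simps)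
  moreover have "c m \<noteq> 0" for m using c_pos[of m] by simp
  then have "(x - x0) * (\<Sum>m<N. vpoly (Suc m) x * vpoly (Suc m) x0 / c m)
      = vpoly (Suc N) x * vpoly N x0 - vpoly N x * vpoly (Suc N) x0"
    using three_term_green_identity[of c "\<lambda>m. vpoly m x" x "\<lambda>m. vpoly m x0" x0 N,
        OF _ vpoly_recurrence vpoly_recurrence] by simp
  ultimately show ?thesis by (simp add: mult.left_commute)
qed

end

locale jacobi_measure = jacobi_recurrence +
  fixes M :: "real measure"
  assumes prob_space_M: "prob_space M" and sets_M: "sets M = sets borel"
    and vpoly_integrable: "\<And>m n. integrable M (\<lambda>x. vpoly m x * vpoly n x)"
    and vpoly_orthogonal: "\<And>m n. (\<integral>x. vpoly (Suc m) x * vpoly (Suc n) x \<partial>M) = (if m = n then h m else 0)"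
begin

sublocale M: prob_space M
  by (rule prob_space_M)

lemma space_M: "space M = UNIV"
  using sets_eq_imp_space_eq[OF sets_M] by simp

lemma borel_sets_M [measurable]: "A \<in> sets borel \<Longrightarrow> A \<in> sets M"
  using sets_M by simp

lemma christoffel_kernel_mult_vpoly_eq_sum:
  "christoffel_kernel x0 N x * vpoly n x = (\<Sum>m<N. vpoly (Suc m) x0 / h m * (vpoly (Suc m) x * vpoly n x))"
  unfolding christoffel_kernel_def sum_distrib_right by (intro sum.cong) auto

lemma christoffel_kernel_mult_vpoly_integrable: "integrable M (\<lambda>x. christoffel_kernel x0 N x * vpoly n x)"
  unfolding christoffel_kernel_mult_vpoly_eq_sum using vpoly_integrable by simp

lemma integral_christoffel_kernel_mult_vpoly:
  "(\<integral>x. christoffel_kernel x0 N x * vpoly (Suc n) x \<partial>M) = (if n < N then vpoly (Suc n) x0 else 0)"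
proof -
  have "(\<integral>x. christoffel_kernel x0 N x * vpoly (Suc n) x \<partial>M)
      = (\<Sum>m<N. vpoly (Suc m) x0 / h m * (\<integral>x. vpoly (Suc m) x * vpoly (Suc n) x \<partial>M))"
    unfolding christoffel_kernel_mult_vpoly_eq_sum using vpoly_integrable by simp
  also have "\<dots> = (\<Sum>m<N. if m = n then vpoly (Suc n) x0 else 0)"
    unfolding vpoly_orthogonal by (intro sum.cong) auto
  finally show ?thesis by simp
qed

lemma christoffel_kernel_integrable: "integrable M (christoffel_kernel x0 N)"
  using christoffel_kernel_mult_vpoly_integrable[of x0 N 1] by simp

lemma integral_christoffel_kernel: "N \<ge> 1 \<Longrightarrow> (\<integral>x. christoffel_kernel x0 N x \<partial>M) = 1"
  using integral_christoffel_kernel_mult_vpoly[of x0 N 0] by simp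

lemma christoffel_kernel_sq_eq_sum:
  "(christoffel_kernel x0 N x)\<^sup>2 = (\<Sum>m<N. vpoly (Suc m) x0 / h m * (christoffel_kernel x0 N x * vpoly (Suc m) x))"
  by (simp add: power2_eq_square christoffel_kernel_def[of x0 N x] sum_distrib_left sum_distrib_right mult_ac)

lemma christoffel_kernel_sq_integrable: "integrable M (\<lambda>x. (christoffel_kernel x0 N x)\<^sup>2)"
  unfolding christoffel_kernel_sq_eq_sum using christoffel_kernel_mult_vpoly_integrable by simp

lemma integral_christoffel_kernel_sq: "(\<integral>x. (christoffel_kernel x0 N x)\<^sup>2 \<partial>M) = (\<Sum>m<N. christoffel_term x0 m)"
  unfolding christoffel_kernel_sq_eq_sum using christoffel_kernel_mult_vpoly_integrable
  by (simp add: integral_christoffel_kernel_mult_vpoly christoffel_term_def power2_eq_square)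

lemma measure_singleton_christoffel_sum_le:
  assumes "N \<ge> 1"
  shows "measure M {x0} * (\<Sum>m<N. christoffel_term x0 m) \<le> 1"
proof -
  let ?K = "\<Sum>m<N. christoffel_term x0 m"
  have "?K\<^sup>2 * measure M {x0} = (\<integral>x. (christoffel_kernel x0 N x)\<^sup>2 * indicator {x0} x \<partial>M)"
    using space_M
    by (subst Bochner_Integration.integral_cong[OF refl, where g="\<lambda>x. ?K\<^sup>2 * indicator {x0} x"])
       (auto simp: christoffel_kernel_diagonal split: split_indicator)
  also have "\<dots> \<le> (\<integral>x. (christoffel_kernel x0 N x)\<^sup>2 \<partial>M)"
    using integrable_mult_indicator[OF _ christoffel_kernel_sq_integrable, of "{x0}" x0 N]
    by (intro integral_mono) (auto simp: mult.commute christoffel_kernel_sq_integrable split: split_indicator)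
  finally have "?K * (?K * measure M {x0}) \<le> ?K * 1"
    unfolding integral_christoffel_kernel_sq by (simp add: power2_eq_square mult.assoc)
  then show ?thesis
    using christoffel_sum_ge_1[OF assms, of x0] by (simp add: mult.commute)
qed

lemma measure_singleton_eq_0:
  assumes "\<not> summable (christoffel_term x0)"
  shows "measure M {x0} = 0"
proof (rule ccontr)
  assume "measure M {x0} \<noteq> 0"
  then have a: "measure M {x0} > 0" using measure_nonneg[of M "{x0}"] by linarith
  have "summable (christoffel_term x0)"
  proof (rule summableI_nonneg_bounded)
    show "(\<Sum>m<N. christoffel_term x0 m) \<le> 1 / measure M {x0}" for N
    proof (cases "N \<ge> 1")
      case True
      then show ?thesis
        using measure_singleton_christoffel_sum_le[OF True, of x0] a by (simp add: field_simps)
    next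
      case False
      then have "N = 0" by arith
      then show ?thesis using a by simp
    qed
  qed (rule christoffel_term_nonneg)
  with assms show False by simp
qed

text \<open>The integral of \<open>((x - x\<^sub>0) K\<^sub>N(x\<^sub>0,x))\<^sup>2\<close> measures how far the kernel is from
  concentrating at \<open>x\<^sub>0\<close>; by Christoffel--Darboux it involves only \<open>vpoly N\<close> and
  \<open>vpoly (N+1)\<close> at \<open>x\<^sub>0\<close>.\<close>

definition kernel_defect :: "real \<Rightarrow> nat \<Rightarrow> real" where
  "kernel_defect x0 N = (\<integral>x. ((x - x0) * christoffel_kernel x0 N x)\<^sup>2 \<partial>M)"

lemma kernel_defect_integrand_eq:
  "((x - x0) * christoffel_kernel x0 N x)\<^sup>2 = (c 0)\<^sup>2 * ((vpoly N x0)\<^sup>2 * (vpoly (Suc N) x * vpoly (Suc N) x)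
      - 2 * vpoly N x0 * vpoly (Suc N) x0 * (vpoly (Suc N) x * vpoly N x)
      + (vpoly (Suc N) x0)\<^sup>2 * (vpoly N x * vpoly N x))"
  unfolding christoffel_darboux by (simp add: power2_eq_square algebra_simps)

lemma kernel_defect_integrable: "integrable M (\<lambda>x. ((x - x0) * christoffel_kernel x0 N x)\<^sup>2)"
  unfolding kernel_defect_integrand_eq using vpoly_integrable by simp

lemma kernel_defect_le:
  "kernel_defect x0 N \<le> (c 0)\<^sup>2 * (c_hi / c_lo) * ((vpoly N x0)\<^sup>2 + (vpoly (Suc N) x0)\<^sup>2)"
proof -
  have sq: "(\<integral>x. vpoly n x * vpoly n x \<partial>M) \<le> c_hi / c_lo" for n
    using h_le c_lo_pos c_le_hi[of 0] c_pos[of 0] by (cases n) (auto simp: vpoly_orthogonal)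
  have cross: "(\<integral>x. vpoly (Suc N) x * vpoly N x \<partial>M) = 0"
    by (cases N) (auto simp: vpoly_orthogonal)
  have "kernel_defect x0 N = (c 0)\<^sup>2 * ((vpoly N x0)\<^sup>2 * (\<integral>x. vpoly (Suc N) x * vpoly (Suc N) x \<partial>M)
      + (vpoly (Suc N) x0)\<^sup>2 * (\<integral>x. vpoly N x * vpoly N x \<partial>M))"
    unfolding kernel_defect_def kernel_defect_integrand_eq using vpoly_integrable by (simp add: cross)
  also have "\<dots> \<le> (c 0)\<^sup>2 * ((vpoly N x0)\<^sup>2 * (c_hi / c_lo) + (vpoly (Suc N) x0)\<^sup>2 * (c_hi / c_lo))"
    using sq by (intro mult_left_mono add_mono) auto
  finally show ?thesis by (simp add: algebra_simps)
qed

lemma kernel_defect_LIMSEQ_0: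
  assumes "summable (christoffel_term x0)"
  shows "kernel_defect x0 \<longlonglongrightarrow> 0"
proof (rule Lim_null_comparison)
  show "\<forall>\<^sub>F N in sequentially.
      norm (kernel_defect x0 N) \<le> (c 0)\<^sup>2 * (c_hi / c_lo) * ((vpoly N x0)\<^sup>2 + (vpoly (Suc N) x0)\<^sup>2)"
    using kernel_defect_le by (intro always_eventually) (simp add: kernel_defect_def)
  have "(\<lambda>N. vpoly (Suc N) x0) \<longlonglongrightarrow> 0"
    using vpoly_LIMSEQ_0[OF assms] filterlim_sequentially_Suc[of "\<lambda>N. vpoly N x0"] by simp
  then show "(\<lambda>N. (c 0)\<^sup>2 * (c_hi / c_lo) * ((vpoly N x0)\<^sup>2 + (vpoly (Suc N) x0)\<^sup>2)) \<longlonglongrightarrow> 0"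
    using vpoly_LIMSEQ_0[OF assms] c_lo_pos by (auto intro!: tendsto_eq_intros)
qed

lemma christoffel_kernel_mult_indicator_integrable:
  "A \<in> sets borel \<Longrightarrow> integrable M (\<lambda>x. indicator A x * christoffel_kernel x0 N x)"
  using integrable_mult_indicator[OF _ christoffel_kernel_integrable, of A x0 N] by simp

lemma one_minus_atom_eq_integral_off_atom:
  assumes "N \<ge> 1"
  shows "1 - measure M {x0} * (\<Sum>m<N. christoffel_term x0 m)
    = (\<integral>x. indicator (- {x0}) x * christoffel_kernel x0 N x \<partial>M)"
proof -
  let ?Q = "christoffel_kernel x0 N"
  have "(\<integral>x. indicator {x0} x * ?Q x \<partial>M) = (\<integral>x. (\<Sum>m<N. christoffel_term x0 m) * indicator {x0} x \<partial>M)"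
    by (rule Bochner_Integration.integral_cong[OF refl])
       (auto simp: christoffel_kernel_diagonal split: split_indicator)
  then have atom: "(\<integral>x. indicator {x0} x * ?Q x \<partial>M) = measure M {x0} * (\<Sum>m<N. christoffel_term x0 m)"
    using space_M by simp
  have "?Q x = indicator {x0} x * ?Q x + indicator (- {x0}) x * ?Q x" for x
    by (auto split: split_indicator)
  then have "1 = (\<integral>x. indicator {x0} x * ?Q x \<partial>M) + (\<integral>x. indicator (- {x0}) x * ?Q x \<partial>M)"
    using integral_christoffel_kernel[OF assms, of x0]
      christoffel_kernel_mult_indicator_integrable[of "{x0}"]
      christoffel_kernel_mult_indicator_integrable[of "- {x0}"]
    by (simp add: Bochner_Integration.integral_add[symmetric])
  then show ?thesis unfolding atom by simp
qed

text \<open>Split \<open>\<integral>\<^sub>x\<^sub>\<noteq>\<^sub>x\<^sub>0 K\<^sub>N(x\<^sub>0,x) d\<mu>\<close> into the part near \<open>x\<^sub>0\<close>, controlled by the mass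
  of a punctured neighbourhood, and the part away from \<open>x\<^sub>0\<close>, controlled by the kernel defect.\<close>

lemma one_minus_atom_christoffel_sum_le:
  assumes N: "N \<ge> 1" and e: "e > 0" and s: "s > 0" and t: "t > 0"
  shows "\<bar>1 - measure M {x0} * (\<Sum>m<N. christoffel_term x0 m)\<bar>
     \<le> (t * kernel_defect x0 N + 1 / t) / (2 * e)
        + (s * (\<Sum>m<N. christoffel_term x0 m) + measure M (ball x0 e - {x0}) / s) / 2"
proof -
  let ?Q = "christoffel_kernel x0 N"
  define B where "B x = (t * ((x - x0) * ?Q x)\<^sup>2 + 1 / t) / (2 * e)
      + (s * (?Q x)\<^sup>2 + indicator (ball x0 e - {x0}) x / s) / 2" for x
  have iE: "integrable M (indicator (ball x0 e - {x0}) :: real \<Rightarrow> real)"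
    by (intro integrable_real_indicator) (auto simp: less_top[symmetric] M.emeasure_finite)
  have "\<bar>1 - measure M {x0} * (\<Sum>m<N. christoffel_term x0 m)\<bar>
      \<le> (\<integral>x. \<bar>indicator (- {x0}) x * ?Q x\<bar> \<partial>M)"
    unfolding one_minus_atom_eq_integral_off_atom[OF N] by (rule integral_abs_bound)
  also have "\<dots> \<le> (\<integral>x. B x \<partial>M)"
  proof (intro integral_mono)
    show "integrable M B"
      unfolding B_def using kernel_defect_integrable christoffel_kernel_sq_integrable iE by simp
    show "\<bar>indicator (- {x0}) x * ?Q x\<bar> \<le> B x" for x
    proof (cases "x = x0")
      case True
      then show ?thesis unfolding B_def using e s t by simp
    next
      case False
      then have "\<bar>x - x0\<bar> < e \<Longrightarrow> indicator (ball x0 e - {x0}) x = (1::real)"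
        by (simp add: dist_real_def abs_minus_commute)
      then show ?thesis
        unfolding B_def using abs_le_split_bound[OF e s t, of _ "x - x0" "?Q x"] False by simp
    qed
  qed (use christoffel_kernel_mult_indicator_integrable in simp)
  also have "(\<integral>x. B x \<partial>M) = (t * kernel_defect x0 N + 1 / t) / (2 * e)
      + (s * (\<Sum>m<N. christoffel_term x0 m) + measure M (ball x0 e - {x0}) / s) / 2"
    unfolding B_def kernel_defect_def
    using kernel_defect_integrable christoffel_kernel_sq_integrable iE space_M
    by (simp add: integral_christoffel_kernel_sq M.prob_space[unfolded space_M])
  finally show ?thesis .
qed

lemma measure_punctured_ball_LIMSEQ_0: "(\<lambda>n. measure M (ball x0 (1 / Suc n) - {x0})) \<longlonglongrightarrow> 0"
proof -
  have empty: "(\<Inter>n. ball x0 (1 / Suc n) - {x0}) = {}"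
  proof safe
    fix x assume x: "x \<in> (\<Inter>n. ball x0 (1 / Suc n) - {x0})"
    then have "dist x0 x > 0" by auto
    then obtain n :: nat where "1 / Suc n < dist x0 x"
      by (metis nat_approx_posE)
    moreover have "dist x0 x < 1 / Suc n" using x by auto
    ultimately show "x \<in> {}" by simp
  qed
  have "ball x0 (1 / Suc n) \<subseteq> ball x0 (1 / Suc m)" if "m \<le> n" for m n :: nat
    using that by (intro subset_ball divide_left_mono) auto
  then have "decseq (\<lambda>n. ball x0 (1 / Suc n) - {x0})"
    unfolding decseq_def by blast
  moreover have "ball x0 r - {x0} \<in> sets M" for r
    unfolding sets_M by (intro borel_open open_Diff) auto
  ultimately have "(\<lambda>n. measure M (ball x0 (1 / Suc n) - {x0})) \<longlonglongrightarrow> measure M (\<Inter>n. ball x0 (1 / Suc n) - {x0})"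
    by (intro M.finite_Lim_measure_decseq) auto
  then show ?thesis unfolding empty by simp
qed

lemma one_minus_atom_suminf_le:
  assumes S: "summable (christoffel_term x0)" and "e > 0" "s > 0" "t > 0"
  shows "\<bar>1 - measure M {x0} * suminf (christoffel_term x0)\<bar>
    \<le> 1 / (t * (2 * e)) + (s * suminf (christoffel_term x0) + measure M (ball x0 e - {x0}) / s) / 2"
proof (rule LIMSEQ_le)
  have sums: "(\<lambda>N. \<Sum>m<N. christoffel_term x0 m) \<longlonglongrightarrow> suminf (christoffel_term x0)"
    by (rule summable_LIMSEQ[OF S])
  then show "(\<lambda>N. \<bar>1 - measure M {x0} * (\<Sum>m<N. christoffel_term x0 m)\<bar>)
      \<longlonglongrightarrow> \<bar>1 - measure M {x0} * suminf (christoffel_term x0)\<bar>"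
    by (intro tendsto_intros)
  show "(\<lambda>N. (t * kernel_defect x0 N + 1 / t) / (2 * e)
      + (s * (\<Sum>m<N. christoffel_term x0 m) + measure M (ball x0 e - {x0}) / s) / 2)
      \<longlonglongrightarrow> 1 / (t * (2 * e)) + (s * suminf (christoffel_term x0) + measure M (ball x0 e - {x0}) / s) / 2"
    using kernel_defect_LIMSEQ_0[OF S] sums assms by (auto intro!: tendsto_eq_intros)
  show "\<exists>N0. \<forall>N\<ge>N0. \<bar>1 - measure M {x0} * (\<Sum>m<N. christoffel_term x0 m)\<bar>
      \<le> (t * kernel_defect x0 N + 1 / t) / (2 * e)
         + (s * (\<Sum>m<N. christoffel_term x0 m) + measure M (ball x0 e - {x0}) / s) / 2"
    using assms(2-) by (intro exI[of _ 1] allI impI one_minus_atom_christoffel_sum_le)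
qed

lemma measure_singleton_mult_suminf:
  assumes S: "summable (christoffel_term x0)"
  shows "measure M {x0} * suminf (christoffel_term x0) = 1"
proof -
  define a where "a = measure M {x0}"
  define K where "K = suminf (christoffel_term x0)"
  have K1: "K \<ge> 1" unfolding K_def by (rule suminf_christoffel_ge_1[OF S])
  text \<open>Choose \<open>s = \<delta>/K\<close>, \<open>e\<close> with \<open>\<mu>(B(x\<^sub>0,e) - {x\<^sub>0}) < \<delta>\<^sup>2/K\<close> and \<open>t = 1/(e \<delta>)\<close>.\<close>
  have small: "\<bar>1 - a * K\<bar> \<le> 2 * \<delta>" if \<delta>: "\<delta> > 0" for \<delta>
  proof -
    have "\<forall>\<^sub>F n in sequentially. measure M (ball x0 (1 / Suc n) - {x0}) < \<delta>\<^sup>2 / K"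
      using order_tendstoD(2)[OF measure_punctured_ball_LIMSEQ_0[of x0]] \<delta> K1 by simp
    then obtain n where n: "measure M (ball x0 (1 / Suc n) - {x0}) < \<delta>\<^sup>2 / K"
      using eventually_happens'[OF sequentially_bot] by blast
    define e where "e = 1 / real (Suc n)"
    define X where "X = measure M (ball x0 e - {x0}) / (\<delta> / K)"
    have e: "e > 0" unfolding e_def by simp
    have X: "X < \<delta>"
      using n \<delta> K1 unfolding X_def e_def by (simp add: field_simps power2_eq_square)
    have "1 / (1 / (e * \<delta>) * (2 * e)) = \<delta> / 2" using e \<delta> by simp
    moreover have "\<delta> / K * K = \<delta>" using K1 by simp
    ultimately have "\<bar>1 - a * K\<bar> \<le> \<delta> / 2 + (\<delta> + X) / 2"
      using one_minus_atom_suminf_le[OF S e, of "\<delta> / K" "1 / (e * \<delta>)"] e \<delta> K1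
      unfolding X_def a_def K_def by simp
    also have "\<dots> \<le> 2 * \<delta>" using X \<delta> by (simp add: field_simps)
    finally show ?thesis .
  qed
  have "\<bar>1 - a * K\<bar> \<le> 0 + \<epsilon>" if "\<epsilon> > 0" for \<epsilon>
    using small[of "\<epsilon> / 2"] that by simp
  then have "\<bar>1 - a * K\<bar> \<le> 0"
    by (rule field_le_epsilon)
  then show ?thesis unfolding a_def K_def by simp
qed

lemma measure_singleton_eq_christoffel_weight: "measure M {x0} = christoffel_weight x0"
proof (cases "summable (christoffel_term x0)")
  case True
  then show ?thesis
    using measure_singleton_mult_suminf[OF True] suminf_christoffel_ge_1[OF True]
    unfolding christoffel_weight_def by (simp add: field_simps)
qed (simp add: measure_singleton_eq_0 christoffel_weight_def)

end

section \<open>The infinite q-Pochhammer symbol\<close>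

context
  fixes q :: real
  assumes q: "\<bar>q\<bar> < 1"
begin

lemma qpoch_inf_convergent_prod: "convergent_prod (\<lambda>j. 1 - a * complex_of_real q ^ j)"
proof -
  have "summable (\<lambda>j. norm a * \<bar>q\<bar> ^ j)"
    using q by (intro summable_mult summable_geometric) auto
  then have "summable (\<lambda>j. norm ((1 - a * complex_of_real q ^ j) - 1))"
    by (simp add: norm_mult norm_power)
  then show ?thesis
    by (intro abs_convergent_prod_imp_convergent_prod summable_imp_abs_convergent_prod)
qed

lemma qpoch_inf_LIMSEQ: "(\<lambda>n. \<Prod>j<n. 1 - a * complex_of_real q ^ j) \<longlonglongrightarrow> qpoch_inf a q"
  unfolding qpoch_inf_def
  using convergent_prod_LIMSEQ[OF qpoch_inf_convergent_prod[of a]]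
    LIMSEQ_lessThan_iff_atMost[where f="\<lambda>I. \<Prod>j\<in>I. 1 - a * complex_of_real q ^ j"]
  by simp

lemma norm_qpoch_inf_le: "norm (qpoch_inf a q) \<le> exp (norm a / (1 - \<bar>q\<bar>))"
proof (rule LIMSEQ_le_const2[OF tendsto_norm[OF qpoch_inf_LIMSEQ[of a]]], intro exI allI impI)
  fix n
  have "norm (\<Prod>j<n. 1 - a * complex_of_real q ^ j) \<le> (\<Prod>j<n. 1 + norm a * \<bar>q\<bar> ^ j)"
    unfolding prod_norm[symmetric]
    by (intro prod_mono conjI order.trans[OF norm_triangle_ineq4]) (auto simp: norm_mult norm_power)
  also have "\<dots> \<le> exp (\<Sum>j<n. norm a * \<bar>q\<bar> ^ j)"
    by (intro prod_le_exp_sum) auto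
  also have "(\<Sum>j<n. norm a * \<bar>q\<bar> ^ j) \<le> norm a * (1 / (1 - \<bar>q\<bar>))"
    unfolding sum_distrib_left[symmetric]
    using geometric_partial_sum_le[of "\<bar>q\<bar>" n] q by (intro mult_left_mono) auto
  finally show "norm (\<Prod>j<n. 1 - a * complex_of_real q ^ j) \<le> exp (norm a / (1 - \<bar>q\<bar>))"
    by simp
qed

lemma qpoch_inf_nonzero:
  assumes "\<And>j. a * complex_of_real q ^ j \<noteq> 1"
  shows "qpoch_inf a q \<noteq> 0"
  unfolding qpoch_inf_def using assms by (intro prodinf_nonzero qpoch_inf_convergent_prod) auto

lemma qpoch_inf_unfold: "qpoch_inf a q = (1 - a) * qpoch_inf (a * complex_of_real q) q"
proof -
  have "(\<lambda>n. 1 - a * complex_of_real q ^ Suc n) has_prod qpoch_inf (a * complex_of_real q) q"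
    unfolding qpoch_inf_def using qpoch_inf_convergent_prod[of "a * complex_of_real q"]
    by (simp add: convergent_prod_has_prod mult_ac)
  from has_prod_Suc_imp[OF this] show ?thesis
    unfolding qpoch_inf_def by (simp add: has_prod_iff mult.commute)
qed

lemma qpoch_inf_uniform_limit:
  "uniform_limit (cball 0 r) (\<lambda>N a. \<Prod>j<N. 1 - a * complex_of_real q ^ j) (\<lambda>a. qpoch_inf a q)
     sequentially"
proof -
  have "uniformly_convergent_on (cball 0 r) (\<lambda>N a. \<Prod>j<N. 1 - a * complex_of_real q ^ j)"
  proof (rule uniformly_convergent_on_prod')
    show "uniformly_convergent_on (cball 0 r) (\<lambda>N a. \<Sum>n<N. norm ((1 - a * complex_of_real q ^ n) - 1))"
    proof (rule Weierstrass_m_test')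
      show "norm (norm ((1 - a * complex_of_real q ^ n) - 1)) \<le> r * \<bar>q\<bar> ^ n"
        if "a \<in> cball 0 r" for n a
        using that by (auto simp: norm_mult norm_power intro!: mult_right_mono)
      show "summable (\<lambda>n. r * \<bar>q\<bar> ^ n)"
        using q by (intro summable_mult summable_geometric) auto
    qed
  qed (auto intro!: continuous_intros)
  then obtain l where l: "uniform_limit (cball 0 r) (\<lambda>N a. \<Prod>j<N. 1 - a * complex_of_real q ^ j) l sequentially"
    unfolding uniformly_convergent_on_def by blast
  have "l a = qpoch_inf a q" if "a \<in> cball 0 r" for a
    using tendsto_uniform_limitI[OF l that] qpoch_inf_LIMSEQ[of a] LIMSEQ_unique by blast
  with l show ?thesis
    by (metis (no_types, lifting) uniform_limit_cong')
qed

lemma qpoch_inf_holomorphic: "(\<lambda>a. qpoch_inf a q) holomorphic_on UNIV"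
proof (rule holomorphic_on_UNIV_from_balls)
  fix R
  show "(\<lambda>a. qpoch_inf a q) holomorphic_on ball 0 R"
    by (rule holomorphic_uniform_limit[OF _ qpoch_inf_uniform_limit[of R]])
       (auto intro!: always_eventually holomorphic_intros continuous_intros)
qed

end

section \<open>The functions \<open>\<psi>\<^sup>+\<close>\<close>

locale q_params =
  fixes q \<alpha> \<beta> :: real
  assumes q_pos: "0 < q" and q_less_1: "q < 1"
    and alpha_gt: "-1 < \<alpha>" and alpha_less_1: "\<alpha> < 1" and beta_less_1: "\<beta> < 1"
begin

lemma abs_q_less_1: "\<bar>q\<bar> < 1"
  using q_pos q_less_1 by simp

lemma q_power_le_1: "q ^ n \<le> 1"
  using q_pos q_less_1 by (intro power_le_one) auto

text \<open>Each factor of \<open>c\<^sub>k(z)\<close> is \<open>\<alpha> + O(q\<^sup>j)\<close>, so \<open>c\<^sub>k(z) = O(rho\<^sup>k)\<close> for any \<open>rho > |\<alpha>|\<close>.\<close>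

definition rho :: real where "rho = (1 + \<bar>\<alpha>\<bar>) / 2"

lemma rho_ge_half: "rho \<ge> 1/2" and rho_less_1: "rho < 1" and abs_alpha_le_rho: "\<bar>\<alpha>\<bar> \<le> rho"
  using alpha_gt alpha_less_1 by (auto simp: rho_def)

definition Lc :: "real \<Rightarrow> real" where "Lc R = \<bar>\<alpha>\<bar> * R\<^sup>2 + \<bar>\<beta>\<bar> * (1 + R\<^sup>2)"

definition Cc :: "real \<Rightarrow> real" where "Cc R = exp (2 * Lc R / (1 - q))"

lemma Lc_nonneg: "Lc R \<ge> 0"
  unfolding Lc_def by simp

definition ck_factor :: "nat \<Rightarrow> complex \<Rightarrow> complex" where
  "ck_factor j z = complex_of_real \<alpha> * (1 + z\<^sup>2 * complex_of_real q ^ (2*j))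
                   - complex_of_real \<beta> * complex_of_real q ^ j * (1 + z\<^sup>2)"

lemma ck_eq_prod: "ck q \<alpha> \<beta> k z = (\<Prod>j<k. ck_factor j z)"
  unfolding ck_def ck_factor_def ..

lemma norm_ck_factor_le:
  assumes "norm z \<le> R"
  shows "norm (ck_factor j z) \<le> rho + Lc R * q ^ j"
proof -
  have z2: "norm z ^ 2 \<le> R\<^sup>2" using assms by (simp add: power_mono)
  have q2j: "q ^ (2*j) \<le> q ^ j" using q_pos q_less_1 by (intro power_decreasing) auto
  have a: "norm (complex_of_real \<alpha> * (1 + z\<^sup>2 * complex_of_real q ^ (2*j))) \<le> \<bar>\<alpha>\<bar> * (1 + R\<^sup>2 * q ^ j)"
  proof -
    have "norm (1 + z\<^sup>2 * complex_of_real q ^ (2*j)) \<le> 1 + norm z ^ 2 * q ^ (2*j)"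
      using norm_triangle_ineq[of 1 "z\<^sup>2 * complex_of_real q ^ (2*j)"] q_pos
      by (simp add: norm_mult norm_power)
    also have "\<dots> \<le> 1 + R\<^sup>2 * q ^ j"
      using z2 q2j q_pos by (intro add_left_mono mult_mono) auto
    finally show ?thesis by (simp add: norm_mult mult_left_mono)
  qed
  have b: "norm (complex_of_real \<beta> * complex_of_real q ^ j * (1 + z\<^sup>2)) \<le> \<bar>\<beta>\<bar> * q ^ j * (1 + R\<^sup>2)"
  proof -
    have "norm (1 + z\<^sup>2) \<le> 1 + R\<^sup>2"
      using norm_triangle_ineq[of 1 "z\<^sup>2"] z2 by (simp add: norm_power)
    then show ?thesis using q_pos by (simp add: norm_mult norm_power mult_left_mono)
  qed
  have "norm (ck_factor j z) \<le> \<bar>\<alpha>\<bar> * (1 + R\<^sup>2 * q ^ j) + \<bar>\<beta>\<bar> * q ^ j * (1 + R\<^sup>2)"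
    unfolding ck_factor_def by (rule order.trans[OF norm_triangle_ineq4 add_mono[OF a b]])
  also have "\<dots> = \<bar>\<alpha>\<bar> + Lc R * q ^ j"
    unfolding Lc_def by (simp add: algebra_simps)
  finally show ?thesis using abs_alpha_le_rho by linarith
qed

lemma norm_ck_le:
  assumes "norm z \<le> R"
  shows "norm (ck q \<alpha> \<beta> k z) \<le> Cc R * rho ^ k"
proof -
  define L where "L = Lc R / rho"
  have "Lc R * 1 \<le> Lc R * (2 * rho)"
    using Lc_nonneg rho_ge_half by (intro mult_left_mono) auto
  then have L: "0 \<le> L" "L \<le> 2 * Lc R"
    using Lc_nonneg rho_ge_half by (auto simp: L_def field_simps)
  have "norm (ck q \<alpha> \<beta> k z) \<le> (\<Prod>j<k. rho * (1 + L * q ^ j))"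
    unfolding ck_eq_prod prod_norm[symmetric]
  proof (intro prod_mono conjI)
    fix j
    have "rho * (1 + L * q ^ j) = rho + Lc R * q ^ j"
      using rho_ge_half by (simp add: L_def field_simps)
    then show "norm (ck_factor j z) \<le> rho * (1 + L * q ^ j)"
      using norm_ck_factor_le[OF assms, of j] by simp
  qed auto
  also have "\<dots> = rho ^ k * (\<Prod>j<k. 1 + L * q ^ j)"
    by (simp add: prod.distrib)
  also have "(\<Prod>j<k. 1 + L * q ^ j) \<le> exp (\<Sum>j<k. L * q ^ j)"
    using L q_pos by (intro prod_le_exp_sum) auto
  also have "(\<Sum>j<k. L * q ^ j) \<le> 2 * Lc R * (1 / (1 - q))"
    unfolding sum_distrib_left[symmetric]
    using geometric_partial_sum_le[of q k] q_pos q_less_1 L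
    by (intro mult_mono) (auto intro: sum_nonneg)
  finally show ?thesis
    unfolding Cc_def using rho_ge_half by (simp add: mult.commute mult_left_mono)
qed

definition qpoch_q :: "nat \<Rightarrow> real" where "qpoch_q k = (\<Prod>j<k. 1 - q ^ Suc j)"

lemma qpoch_eq_qpoch_q: "qpoch (complex_of_real q) q k = complex_of_real (qpoch_q k)"
  unfolding qpoch_def qpoch_q_def by (simp add: mult.commute)

lemma qpoch_q_lower: "qpoch_q k \<ge> exp (- (1 / (1 - q)\<^sup>2))"
proof -
  have "(\<Sum>j<k. q ^ Suc j / (1 - q)) = q / (1 - q) * (\<Sum>j<k. q ^ j)"
    by (simp add: sum_distrib_left)
  also have "\<dots> \<le> q / (1 - q) * (1 / (1 - q))"
    using q_pos q_less_1 geometric_partial_sum_le by (intro mult_left_mono) auto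
  also have "\<dots> \<le> 1 / (1 - q)\<^sup>2"
    using q_pos q_less_1 by (simp add: power2_eq_square divide_right_mono)
  finally have "exp (- (1 / (1 - q)\<^sup>2)) \<le> exp (\<Sum>j<k. - (q ^ Suc j) / (1 - q))"
    by (simp add: sum_negf)
  also have "\<dots> = (\<Prod>j<k. exp (- (q ^ Suc j) / (1 - q)))"
    by (simp add: exp_sum)
  also have "\<dots> \<le> qpoch_q k"
    unfolding qpoch_q_def
  proof (intro prod_mono conjI)
    show "exp (- (q ^ Suc j) / (1 - q)) \<le> 1 - q ^ Suc j" for j
      using q_pos q_less_1 q_power_le_1[of j]
      by (intro exp_neg_le_one_minus) (auto simp: mult_left_le)
  qed auto
  finally show ?thesis .
qed

lemma qpoch_q_pos: "qpoch_q k > 0"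
  using qpoch_q_lower[of k] by (meson exp_gt_zero less_le_trans)

definition psi_coeff :: "nat \<Rightarrow> complex \<Rightarrow> complex" where
  "psi_coeff k z = qpoch_inf (complex_of_real q ^ (k+1) * z\<^sup>2) q / qpoch (complex_of_real q) q k * ck q \<alpha> \<beta> k z"

definition Phi :: "nat \<Rightarrow> complex \<Rightarrow> complex" where
  "Phi m z = (\<Sum>k. psi_coeff k z * complex_of_real q ^ (m*k))"

lemma psi_plus_eq_Phi: "psi_plus q \<alpha> \<beta> (int m - 1) z = z powi (int m - 1) * Phi m z"
  unfolding psi_plus_def Phi_def psi_coeff_def by simp

definition Ccoeff :: "real \<Rightarrow> real" where
  "Ccoeff R = exp (R\<^sup>2 / (1 - q)) * exp (1 / (1 - q)\<^sup>2) * Cc R"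

lemma Ccoeff_pos: "Ccoeff R > 0"
  unfolding Ccoeff_def Cc_def by simp

lemma norm_psi_coeff_le:
  assumes "norm z \<le> R"
  shows "norm (psi_coeff k z) \<le> Ccoeff R * rho ^ k"
proof -
  have "norm (complex_of_real q ^ (k+1) * z\<^sup>2) = q ^ (k+1) * norm z ^ 2"
    using q_pos by (simp add: norm_mult norm_power)
  also have "\<dots> \<le> 1 * R\<^sup>2"
    using q_pos q_power_le_1[of "k+1"] assms by (intro mult_mono power_mono) auto
  finally have "norm (complex_of_real q ^ (k+1) * z\<^sup>2) / (1 - q) \<le> R\<^sup>2 / (1 - q)"
    using q_less_1 by (simp add: divide_right_mono)
  then have a: "norm (qpoch_inf (complex_of_real q ^ (k+1) * z\<^sup>2) q) \<le> exp (R\<^sup>2 / (1 - q))"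
    using norm_qpoch_inf_le[OF abs_q_less_1, of "complex_of_real q ^ (k+1) * z\<^sup>2"] q_pos
    by (simp add: order.trans)
  have "norm (1 / qpoch (complex_of_real q) q k) = 1 / qpoch_q k"
    using qpoch_q_pos[of k] by (simp add: qpoch_eq_qpoch_q norm_divide)
  also have "\<dots> \<le> 1 / exp (- (1 / (1 - q)\<^sup>2))"
    using qpoch_q_lower[of k] qpoch_q_pos[of k] by (intro divide_left_mono) auto
  also have "\<dots> = exp (1 / (1 - q)\<^sup>2)"
    by (simp add: exp_minus field_simps)
  finally have b: "norm (1 / qpoch (complex_of_real q) q k) \<le> exp (1 / (1 - q)\<^sup>2)" .
  have "norm (psi_coeff k z) = norm (qpoch_inf (complex_of_real q ^ (k+1) * z\<^sup>2) q)
      * norm (1 / qpoch (complex_of_real q) q k) * norm (ck q \<alpha> \<beta> k z)"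
    unfolding psi_coeff_def by (simp add: norm_mult norm_divide)
  also have "\<dots> \<le> exp (R\<^sup>2 / (1 - q)) * exp (1 / (1 - q)\<^sup>2) * (Cc R * rho ^ k)"
    using a b norm_ck_le[OF assms, of k] by (intro mult_mono) auto
  finally show ?thesis unfolding Ccoeff_def by (simp add: mult.assoc)
qed

lemma psi_coeff_holomorphic: "psi_coeff k holomorphic_on UNIV"
proof -
  have "(\<lambda>a. qpoch_inf a q) \<circ> (\<lambda>z. complex_of_real q ^ (k+1) * z\<^sup>2) holomorphic_on UNIV"
    by (intro holomorphic_on_compose holomorphic_intros
        holomorphic_on_subset[OF qpoch_inf_holomorphic[OF abs_q_less_1]]) auto
  then show ?thesis
    unfolding psi_coeff_def ck_def using qpoch_q_pos
    by (intro holomorphic_intros) (auto simp: qpoch_eq_qpoch_q o_def)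
qed

lemma psi_coeff_0: "psi_coeff 0 z = qpoch_inf (complex_of_real q * z\<^sup>2) q"
  unfolding psi_coeff_def qpoch_def ck_def by simp

lemma psi_coeff_0_nonzero:
  assumes "norm z \<le> 1"
  shows "psi_coeff 0 z \<noteq> 0"
  unfolding psi_coeff_0
proof (rule qpoch_inf_nonzero[OF abs_q_less_1])
  fix j
  have "norm (complex_of_real q * z\<^sup>2 * complex_of_real q ^ j) = q ^ Suc j * norm z ^ 2"
    using q_pos by (simp add: norm_mult norm_power)
  also have "\<dots> \<le> q ^ Suc j * 1" using assms q_pos by (intro mult_left_mono power_le_one) auto
  also have "\<dots> < 1" using power_Suc_less_one[OF q_pos q_less_1, of j] by simp
  finally show "complex_of_real q * z\<^sup>2 * complex_of_real q ^ j \<noteq> 1" by auto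
qed

lemma psi_coeff_Suc:
  "psi_coeff (Suc k) z * (1 - complex_of_real q ^ Suc k) * (1 - z\<^sup>2 * complex_of_real q ^ Suc k)
     = psi_coeff k z * ck_factor k z"
proof -
  have qp: "qpoch (complex_of_real q) q (Suc k) = qpoch (complex_of_real q) q k * (1 - complex_of_real q ^ Suc k)"
    unfolding qpoch_def by (simp add: mult.commute)
  have qi: "qpoch_inf (complex_of_real q ^ (k+1) * z\<^sup>2) q
      = (1 - complex_of_real q ^ Suc k * z\<^sup>2) * qpoch_inf (complex_of_real q ^ (Suc k + 1) * z\<^sup>2) q"
    using qpoch_inf_unfold[OF abs_q_less_1, of "complex_of_real q ^ (k+1) * z\<^sup>2"] by (simp add: mult_ac)
  have "qpoch (complex_of_real q) q k \<noteq> 0"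
    using qpoch_q_pos[of k] by (simp add: qpoch_eq_qpoch_q)
  moreover have "complex_of_real q ^ Suc k \<noteq> 1"
    using power_Suc_less_one[OF q_pos q_less_1, of k] by (metis less_irrefl of_real_eq_1_iff of_real_power)
  ultimately show ?thesis
    unfolding psi_coeff_def ck_eq_prod qp qi by (simp add: field_simps)
qed

lemma norm_Phi_term_le:
  assumes "norm z \<le> R"
  shows "norm (psi_coeff k z * complex_of_real q ^ (m*k)) \<le> Ccoeff R * rho ^ k"
proof -
  have "norm (psi_coeff k z * complex_of_real q ^ (m*k)) = norm (psi_coeff k z) * q ^ (m*k)"
    using q_pos by (simp add: norm_mult norm_power)
  also have "\<dots> \<le> Ccoeff R * rho ^ k * 1"
    using norm_psi_coeff_le[OF assms] q_power_le_1 Ccoeff_pos[of R] rho_ge_half q_pos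
    by (intro mult_mono) auto
  finally show ?thesis by simp
qed

lemma summable_rho_geometric: "summable (\<lambda>k. c * rho ^ k)"
  using rho_ge_half rho_less_1 by (intro summable_mult summable_geometric) auto

lemma suminf_rho_geometric: "(\<Sum>k. c * rho ^ k) = c / (1 - rho)"
  using rho_ge_half rho_less_1 by (simp add: suminf_mult suminf_geometric)

lemma Phi_norm_summable: "summable (\<lambda>k. norm (psi_coeff k z * complex_of_real q ^ (m*k)))"
  by (rule summable_comparison_test'[OF summable_rho_geometric[of "Ccoeff (norm z)"]])
     (use norm_Phi_term_le in auto)

lemma Phi_sums: "(\<lambda>k. psi_coeff k z * complex_of_real q ^ (m*k)) sums Phi m z"
  unfolding Phi_def by (rule summable_sums[OF summable_norm_cancel[OF Phi_norm_summable]])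

lemma norm_Phi_le:
  assumes "norm z \<le> R"
  shows "norm (Phi m z) \<le> Ccoeff R / (1 - rho)"
proof -
  have "norm (Phi m z) \<le> (\<Sum>k. norm (psi_coeff k z * complex_of_real q ^ (m*k)))"
    unfolding Phi_def by (rule summable_norm[OF Phi_norm_summable])
  also have "\<dots> \<le> (\<Sum>k. Ccoeff R * rho ^ k)"
    by (intro suminf_le Phi_norm_summable summable_rho_geometric norm_Phi_term_le assms)
  finally show ?thesis by (simp add: suminf_rho_geometric)
qed

lemma norm_Phi_minus_psi_coeff_0_le:
  assumes "norm z \<le> R"
  shows "norm (Phi m z - psi_coeff 0 z) \<le> q ^ m * (Ccoeff R / (1 - rho))"
proof -
  let ?f = "\<lambda>k. psi_coeff k z * complex_of_real q ^ (m*k)"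
  have snf: "summable (\<lambda>k. norm (?f (Suc k)))"
    using Phi_norm_summable[of z m] by (subst summable_Suc_iff)
  have bound: "norm (?f (Suc k)) \<le> q ^ m * (Ccoeff R * rho ^ k)" for k
  proof -
    have "rho ^ Suc k \<le> rho ^ k" using rho_ge_half rho_less_1 by (intro power_decreasing) auto
    then have A: "norm (psi_coeff (Suc k) z) \<le> Ccoeff R * rho ^ k"
      by (rule order.trans[OF norm_psi_coeff_le[OF assms] mult_left_mono]) (use Ccoeff_pos[of R] in auto)
    have B: "q ^ m * q ^ (m*k) \<le> q ^ m"
      using q_power_le_1[of "m*k"] q_pos by (intro mult_left_le) auto
    have "norm (?f (Suc k)) = norm (psi_coeff (Suc k) z) * (q ^ m * q ^ (m*k))"
      using q_pos by (simp add: norm_mult norm_power power_add)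
    also have "\<dots> \<le> (Ccoeff R * rho ^ k) * q ^ m"
      using A B q_pos Ccoeff_pos[of R] rho_ge_half by (intro mult_mono) auto
    finally show ?thesis by (simp only: mult.commute)
  qed
  have "Phi m z - psi_coeff 0 z = (\<Sum>k. ?f (Suc k))"
    unfolding Phi_def using suminf_split_head[OF summable_norm_cancel[OF Phi_norm_summable]] by simp
  also have "norm \<dots> \<le> (\<Sum>k. norm (?f (Suc k)))"
    by (rule summable_norm[OF snf])
  also have "\<dots> \<le> (\<Sum>k. q ^ m * (Ccoeff R * rho ^ k))"
    by (intro suminf_le snf bound summable_mult summable_rho_geometric)
  also have "\<dots> = q ^ m * (Ccoeff R / (1 - rho))"
    by (simp only: suminf_mult[OF summable_rho_geometric] suminf_rho_geometric)
  finally show ?thesis .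
qed

lemma Phi_LIMSEQ: "(\<lambda>m. Phi m z) \<longlonglongrightarrow> psi_coeff 0 z"
proof -
  have "(\<lambda>m. Phi m z - psi_coeff 0 z) \<longlonglongrightarrow> 0"
  proof (rule Lim_null_comparison)
    show "\<forall>\<^sub>F m in sequentially. norm (Phi m z - psi_coeff 0 z) \<le> q ^ m * (Ccoeff (norm z) / (1 - rho))"
      by (intro always_eventually allI norm_Phi_minus_psi_coeff_0_le) simp
    show "(\<lambda>m. q ^ m * (Ccoeff (norm z) / (1 - rho))) \<longlonglongrightarrow> 0"
      using q_pos q_less_1 by (intro tendsto_mult_left_zero LIMSEQ_power_zero) auto
  qed
  then show ?thesis by (simp add: LIM_zero_iff)
qed

lemma Phi_uniform_limit:
  "uniform_limit (cball 0 R) (\<lambda>n z. \<Sum>k<n. psi_coeff k z * complex_of_real q ^ (m*k)) (Phi m) sequentially"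
  unfolding Phi_def[abs_def]
  by (rule Weierstrass_m_test[OF _ summable_rho_geometric[of "Ccoeff R"]]) (auto intro: norm_Phi_term_le)

lemma Phi_holomorphic_ball: "Phi m holomorphic_on ball 0 R"
  and Phi_continuous_on_cball: "continuous_on (cball 0 R) (Phi m)"
proof -
  have "(\<lambda>z. \<Sum>k<n. psi_coeff k z * complex_of_real q ^ (m*k)) holomorphic_on UNIV" for n
    using psi_coeff_holomorphic by (intro holomorphic_intros) auto
  then have "\<forall>\<^sub>F n in sequentially.
      continuous_on (cball 0 R) (\<lambda>z. \<Sum>k<n. psi_coeff k z * complex_of_real q ^ (m*k))
      \<and> (\<lambda>z. \<Sum>k<n. psi_coeff k z * complex_of_real q ^ (m*k)) holomorphic_on ball 0 R"
    by (intro always_eventually allI conjI holomorphic_on_imp_continuous_on)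
       (auto intro: holomorphic_on_subset)
  from holomorphic_uniform_limit[OF this Phi_uniform_limit]
  show "Phi m holomorphic_on ball 0 R" "continuous_on (cball 0 R) (Phi m)" by auto
qed

lemma Phi_holomorphic: "Phi m holomorphic_on UNIV"
  by (rule holomorphic_on_UNIV_from_balls[OF Phi_holomorphic_ball])

text \<open>The recurrence is obtained by telescoping: \<open>psi_coeff_Suc\<close> turns the \<open>k+1\<close>-st term of the
  left-hand series into the \<open>k\<close>-th term of the right-hand one.\<close>

lemma Phi_recurrence:
  "(1 - complex_of_real (\<alpha> * q ^ m)) * (z\<^sup>2 * Phi (m+2) z + Phi m z)
     = (1 - complex_of_real (\<beta> * q ^ m)) * (z\<^sup>2 + 1) * Phi (m+1) z"
proof -
  define Q where "Q = complex_of_real q"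
  define P where "P j k = psi_coeff k z * Q ^ (j*k)" for j k
  have Ps: "P j sums Phi j z" for j unfolding P_def Q_def by (rule Phi_sums)
  define T1 where "T1 k = psi_coeff k z * Q ^ (m*k) * (1 - Q ^ k) * (1 - z\<^sup>2 * Q ^ k)" for k
  define T2 where "T2 k = psi_coeff k z * Q ^ (m*k) * Q ^ m * ck_factor k z" for k
  define lhs where "lhs = Phi m z - Phi (m+1) z - z\<^sup>2 * Phi (m+1) z + z\<^sup>2 * Phi (m+2) z"
  have "T1 = (\<lambda>k. P m k - P (m+1) k - z\<^sup>2 * P (m+1) k + z\<^sup>2 * P (m+2) k)"
    unfolding T1_def P_def by (simp add: fun_eq_iff algebra_simps power_add power_mult_distrib power_mult mult_2)
  then have "T1 sums lhs"
    unfolding lhs_def by (simp only:) (intro sums_add sums_diff sums_mult Ps)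
  moreover have "T1 0 = 0" unfolding T1_def by simp
  moreover have "T1 (Suc k) = T2 k" for k
  proof -
    have "T1 (Suc k) = (psi_coeff (Suc k) z * (1 - Q ^ Suc k) * (1 - z\<^sup>2 * Q ^ Suc k)) * Q ^ (m * Suc k)"
      unfolding T1_def by (simp add: mult_ac)
    also have "\<dots> = psi_coeff k z * ck_factor k z * Q ^ (m * Suc k)"
      unfolding Q_def psi_coeff_Suc ..
    finally show ?thesis unfolding T2_def by (simp add: mult_ac power_add)
  qed
  ultimately have T2_lhs: "T2 sums lhs"
    using sums_Suc_iff[of T1 lhs] by simp
  have "T2 = (\<lambda>k. Q ^ m * (complex_of_real \<alpha> * P m k + complex_of_real \<alpha> * z\<^sup>2 * P (m+2) k
        - complex_of_real \<beta> * P (m+1) k - complex_of_real \<beta> * z\<^sup>2 * P (m+1) k))"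
    unfolding T2_def P_def ck_factor_def Q_def
    by (simp add: fun_eq_iff algebra_simps power_add power_mult_distrib power_mult mult_2 power2_eq_square)
  then have "T2 sums (Q ^ m * (complex_of_real \<alpha> * Phi m z + complex_of_real \<alpha> * z\<^sup>2 * Phi (m+2) z
        - complex_of_real \<beta> * Phi (m+1) z - complex_of_real \<beta> * z\<^sup>2 * Phi (m+1) z))"
    by (simp only:) (intro sums_add sums_diff sums_mult Ps)
  from sums_unique2[OF T2_lhs this] show ?thesis
    unfolding Q_def lhs_def by (simp add: algebra_simps)
qed

abbreviation g :: "nat \<Rightarrow> real" where "g \<equiv> gam q \<alpha> \<beta>"

lemma gam_numer_bounds: "1 - \<bar>\<alpha>\<bar> \<le> 1 - \<alpha> * q ^ m" "1 - \<alpha> * q ^ m \<le> 1 + \<bar>\<alpha>\<bar>"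
proof -
  have "\<bar>\<alpha> * q ^ m\<bar> \<le> \<bar>\<alpha>\<bar>"
    using q_power_le_1[of m] q_pos by (simp add: abs_mult mult_left_le)
  then show "1 - \<bar>\<alpha>\<bar> \<le> 1 - \<alpha> * q ^ m" "1 - \<alpha> * q ^ m \<le> 1 + \<bar>\<alpha>\<bar>" by linarith+
qed

lemma gam_denom_bounds: "min 1 (1 - \<beta>) \<le> 1 - \<beta> * q ^ m" "1 - \<beta> * q ^ m \<le> 1 + \<bar>\<beta>\<bar>"
proof -
  have "\<bar>\<beta> * q ^ m\<bar> \<le> \<bar>\<beta>\<bar>"
    using q_power_le_1[of m] q_pos by (simp add: abs_mult mult_left_le)
  then show "1 - \<beta> * q ^ m \<le> 1 + \<bar>\<beta>\<bar>" by linarith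
  show "min 1 (1 - \<beta>) \<le> 1 - \<beta> * q ^ m"
  proof (cases "\<beta> \<ge> 0")
    case True
    then have "\<beta> * q ^ m \<le> \<beta>" using q_power_le_1[of m] by (simp add: mult_left_le)
    then show ?thesis by simp
  next
    case False
    then have "\<beta> * q ^ m \<le> 0" using q_pos by (simp add: mult_nonpos_nonneg)
    then show ?thesis by simp
  qed
qed

lemma gam_numer_pos: "0 < 1 - \<alpha> * q ^ m"
  using gam_numer_bounds(1)[of m] alpha_gt alpha_less_1 by linarith

lemma gam_denom_pos: "0 < 1 - \<beta> * q ^ m"
proof -
  have "0 < min 1 (1 - \<beta>)" using beta_less_1 by simp
  with gam_denom_bounds(1)[of m] show ?thesis by linarith
qed

definition g_lo :: real where "g_lo = (1 - \<bar>\<alpha>\<bar>) / (1 + \<bar>\<beta>\<bar>)"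
definition g_hi :: real where "g_hi = (1 + \<bar>\<alpha>\<bar>) / min 1 (1 - \<beta>)"

lemma g_lo_pos: "g_lo > 0"
  unfolding g_lo_def using alpha_gt alpha_less_1 by auto

lemma g_lo_le: "g_lo \<le> g m"
  unfolding g_lo_def gam_def
  using gam_numer_bounds(1) gam_denom_bounds(2) gam_numer_pos[of m] gam_denom_pos[of m]
  by (intro frac_le) auto

lemma g_le_hi: "g m \<le> g_hi"
proof -
  have "0 < min 1 (1 - \<beta>)" using beta_less_1 by simp
  then show ?thesis
    unfolding g_hi_def gam_def using gam_numer_bounds(2) gam_denom_bounds(1)
    by (intro frac_le) auto
qed

sublocale jacobi_recurrence g g_lo g_hi
  by unfold_locales (rule g_lo_pos g_lo_le g_le_hi)+

lemma opoly_eq_vpoly: "opoly q \<alpha> \<beta> n x = vpoly (Suc n) x * (\<Prod>j<n. g j)"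
proof -
  have "opoly q \<alpha> \<beta> n x = vpoly (Suc n) x * (\<Prod>j<n. g j)
      \<and> opoly q \<alpha> \<beta> (Suc n) x = vpoly (Suc (Suc n)) x * (\<Prod>j<Suc n. g j)" for n
  proof (induction n)
    case 0
    show ?case using c_pos[of 0] by (simp add: vpoly.simps(3))
  next
    case (Suc n)
    have "opoly q \<alpha> \<beta> (Suc (Suc n)) x
        = x * (vpoly (Suc (Suc n)) x * (\<Prod>j<Suc n. g j)) - g n * g (Suc n) * (vpoly (Suc n) x * (\<Prod>j<n. g j))"
      using Suc.IH by simp
    also have "\<dots> = vpoly (Suc (Suc (Suc n))) x * (\<Prod>j<Suc (Suc n). g j)"
      using c_pos[of n] c_pos[of "Suc n"] by (simp add: vpoly.simps(3) field_simps)
    finally show ?case using Suc.IH by simp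
  qed
  then show ?thesis by simp
qed

text \<open>\<open>psi m\<close> is \<open>\<psi>\<^sup>+\<^sub>m\<^sub>-\<^sub>1\<close>; the shift makes the index a natural number.\<close>

definition psi :: "nat \<Rightarrow> complex \<Rightarrow> complex" where
  "psi m = psi_plus q \<alpha> \<beta> (int m - 1)"

lemma psi_eq_Phi: "z \<noteq> 0 \<Longrightarrow> psi m z = z ^ m / z * Phi m z"
  unfolding psi_def psi_plus_eq_Phi by (simp add: power_int_diff)

lemma psi_Suc_eq_Phi: "psi (Suc m) z = z ^ m * Phi (Suc m) z"
  unfolding psi_def psi_plus_eq_Phi by simp

lemma psi_recurrence:
  assumes "z \<noteq> 0"
  shows "complex_of_real (g m) * (psi (Suc (Suc m)) z + psi m z) = (z + 1 / z) * psi (Suc m) z"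
proof -
  have "complex_of_real (1 - \<beta> * q ^ m) \<noteq> 0"
    using gam_denom_pos[of m] by (simp only: of_real_eq_0_iff)
  then have "1 - complex_of_real (\<beta> * q ^ m) \<noteq> 0" by simp
  then have key: "complex_of_real (g m) * (z\<^sup>2 * Phi (m+2) z + Phi m z) = (z\<^sup>2 + 1) * Phi (m+1) z"
    using Phi_recurrence[of m z] unfolding gam_def by (simp add: field_simps)
  have "complex_of_real (g m) * (psi (Suc (Suc m)) z + psi m z)
      = z ^ m / z * (complex_of_real (g m) * (z\<^sup>2 * Phi (m+2) z + Phi m z))"
    using assms unfolding psi_eq_Phi[OF assms] by (simp add: field_simps power2_eq_square)
  also have "\<dots> = z ^ m / z * ((z\<^sup>2 + 1) * Phi (m+1) z)"
    unfolding key ..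
  also have "\<dots> = (z + 1 / z) * psi (Suc m) z"
    using assms unfolding psi_eq_Phi[OF assms] by (simp add: field_simps power2_eq_square)
  finally show ?thesis .
qed

lemma psi_recurrence_at:
  assumes "z \<noteq> 0" "complex_of_real x = z + 1 / z"
  shows "complex_of_real (g m) * (psi (Suc (Suc m)) z + psi m z) = complex_of_real x * psi (Suc m) z"
  using psi_recurrence[OF assms(1)] assms(2) by simp

lemma vpoly_recurrence_complex:
  "complex_of_real (g m) * (complex_of_real (vpoly (Suc (Suc m)) x) + complex_of_real (vpoly m x))
     = complex_of_real x * complex_of_real (vpoly (Suc m) x)"
  using arg_cong[OF vpoly_recurrence[of m x], of complex_of_real] by simp

lemma complex_g_nonzero: "complex_of_real (g m) \<noteq> 0"
  using c_pos[of m] by simp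

definition Cpsi :: real where "Cpsi = Ccoeff 1 / (1 - rho)"

lemma Cpsi_pos: "Cpsi > 0"
  unfolding Cpsi_def using Ccoeff_pos rho_less_1 by simp

lemma norm_psi_Suc_le:
  assumes "norm w \<le> r" "r \<le> 1"
  shows "norm (psi (Suc m) w) \<le> r ^ m * Cpsi"
proof -
  have "0 \<le> r" using assms(1) norm_ge_zero order_trans by blast
  have "norm (psi (Suc m) w) = norm w ^ m * norm (Phi (Suc m) w)"
    unfolding psi_Suc_eq_Phi by (simp add: norm_mult norm_power)
  also have "\<dots> \<le> r ^ m * Cpsi"
    unfolding Cpsi_def using norm_Phi_le[of w 1] assms \<open>0 \<le> r\<close>
    by (intro mult_mono power_mono) auto
  finally show ?thesis .
qed

lemma psi_0_holomorphic: "psi 0 holomorphic_on (- {0})"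
proof -
  have "psi 0 = (\<lambda>w. inverse w * Phi 0 w)"
    using psi_plus_eq_Phi[of 0] unfolding psi_def by (simp add: fun_eq_iff)
  moreover have "(\<lambda>w. inverse w * Phi 0 w) holomorphic_on (- {0})"
    using Phi_holomorphic[of 0] by (intro holomorphic_intros) (auto intro: holomorphic_on_subset)
  ultimately show ?thesis by simp
qed

lemma psi_vpoly_wronskian:
  assumes "z \<noteq> 0" "complex_of_real x = z + 1 / z"
  shows "complex_of_real (vpoly (Suc N) x) * psi N z - complex_of_real (vpoly N x) * psi (Suc N) z = psi 0 z"
  using three_term_wronskian_const[of "\<lambda>m. complex_of_real (g m)" "\<lambda>m. complex_of_real (vpoly m x)"
      "complex_of_real x" "\<lambda>m. psi m z" N, OF complex_g_nonzero vpoly_recurrence_complex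
      psi_recurrence_at[OF assms]]
  by simp

lemma psi_eq_vpoly:
  assumes "z \<noteq> 0" "complex_of_real x = z + 1 / z" "psi 0 z = 0"
  shows "psi m z = psi 1 z * complex_of_real (vpoly m x)"
proof (rule three_term_solution_unique[of "\<lambda>m. complex_of_real (g m)" _ "complex_of_real x",
      OF complex_g_nonzero psi_recurrence_at[OF assms(1,2)]])
  show "complex_of_real (g m) * (psi 1 z * complex_of_real (vpoly (Suc (Suc m)) x)
      + psi 1 z * complex_of_real (vpoly m x)) = complex_of_real x * (psi 1 z * complex_of_real (vpoly (Suc m) x))"
    for m
    using arg_cong[OF vpoly_recurrence_complex[of m x], of "\<lambda>u. psi 1 z * u"] by (simp add: algebra_simps)
qed (use assms(3) in simp_all)

lemma psi_0_eq_0_if_summable: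
  assumes S: "summable (christoffel_term x)" and z: "z \<noteq> 0" "norm z \<le> 1"
    and x: "complex_of_real x = z + 1 / z"
  shows "psi 0 z = 0"
proof -
  have V: "(\<lambda>N. vpoly (Suc N) x) \<longlonglongrightarrow> 0" "(\<lambda>N. vpoly (Suc (Suc N)) x) \<longlonglongrightarrow> 0"
    using LIMSEQ_Suc[OF vpoly_LIMSEQ_0[OF S]] LIMSEQ_Suc[OF LIMSEQ_Suc[OF vpoly_LIMSEQ_0[OF S]]]
    by simp_all
  have term_bound: "norm (complex_of_real a * psi (Suc m) z) \<le> \<bar>a\<bar> * Cpsi" for a m
    using norm_psi_Suc_le[of z 1 m] z by (simp add: norm_mult mult_left_mono)
  have "(\<lambda>N. complex_of_real (vpoly (Suc (Suc N)) x) * psi (Suc N) z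
      - complex_of_real (vpoly (Suc N) x) * psi (Suc (Suc N)) z) \<longlonglongrightarrow> 0"
  proof (rule Lim_null_comparison)
    show "\<forall>\<^sub>F N in sequentially. norm (complex_of_real (vpoly (Suc (Suc N)) x) * psi (Suc N) z
        - complex_of_real (vpoly (Suc N) x) * psi (Suc (Suc N)) z)
        \<le> \<bar>vpoly (Suc (Suc N)) x\<bar> * Cpsi + \<bar>vpoly (Suc N) x\<bar> * Cpsi"
      by (intro always_eventually allI order.trans[OF norm_triangle_ineq4 add_mono] term_bound)
    show "(\<lambda>N. \<bar>vpoly (Suc (Suc N)) x\<bar> * Cpsi + \<bar>vpoly (Suc N) x\<bar> * Cpsi) \<longlonglongrightarrow> 0"
      using V by (intro tendsto_add_zero tendsto_mult_left_zero tendsto_rabs_zero)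
  qed
  then show ?thesis
    unfolding psi_vpoly_wronskian[OF z(1) x] by (simp add: LIMSEQ_const_iff)
qed

lemma psi_1_nonzero:
  assumes z: "z \<noteq> 0" "norm z \<le> 1" and x: "complex_of_real x = z + 1 / z" and "psi 0 z = 0"
  shows "psi 1 z \<noteq> 0"
proof
  assume "psi 1 z = 0"
  then have "Phi m z = 0" for m
    using psi_eq_vpoly[OF z(1) x \<open>psi 0 z = 0\<close>, of m] z(1) unfolding psi_eq_Phi[OF z(1)] by simp
  then have "psi_coeff 0 z = 0"
    using Phi_LIMSEQ[of z] by (simp add: LIMSEQ_const_iff)
  with psi_coeff_0_nonzero[OF z(2)] show False by simp
qed

text \<open>On the unit circle \<open>|\<psi>\<^sup>+\<^sub>m(z)| = |\<Phi>\<^sub>m\<^sub>+\<^sub>1(z)|\<close> stays away from zero, whereas square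
  summability would make it proportional to a null sequence.\<close>

lemma not_summable_christoffel_unit_circle:
  assumes z: "norm z = 1" and x: "complex_of_real x = z + 1 / z"
  shows "\<not> summable (christoffel_term x)"
proof
  assume S: "summable (christoffel_term x)"
  have z0: "z \<noteq> 0" using z by auto
  have p0: "psi 0 z = 0" by (rule psi_0_eq_0_if_summable[OF S z0 _ x]) (use z in simp)
  have "(\<lambda>m. psi m z) = (\<lambda>m. psi 1 z * complex_of_real (vpoly m x))"
    by (intro ext psi_eq_vpoly[OF z0 x p0])
  then have "(\<lambda>m. psi m z) \<longlonglongrightarrow> psi 1 z * complex_of_real 0"
    by (simp only:) (intro tendsto_intros vpoly_LIMSEQ_0[OF S])
  moreover have "norm (psi m z) = norm (Phi m z)" for m
    unfolding psi_eq_Phi[OF z0] using z by (simp add: norm_mult norm_divide norm_power)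
  ultimately have "(\<lambda>m. norm (Phi m z)) \<longlonglongrightarrow> 0"
    using tendsto_norm_zero[of "\<lambda>m. psi m z"] by simp
  moreover have "(\<lambda>m. norm (Phi m z)) \<longlonglongrightarrow> norm (psi_coeff 0 z)"
    by (intro tendsto_norm Phi_LIMSEQ)
  ultimately have "norm (psi_coeff 0 z) = 0" by (rule LIMSEQ_unique[rotated])
  with psi_coeff_0_nonzero[of z] z show False by simp
qed

lemma christoffel_weight_eq_0_if_abs_le_2:
  assumes "\<bar>x\<bar> \<le> 2"
  shows "christoffel_weight x = 0"
proof -
  obtain z where "norm z = 1" "z + 1 / z = complex_of_real x"
    using plus_inverse_unit_circle_obtain[OF assms] .
  then have "\<not> summable (christoffel_term x)"
    using not_summable_christoffel_unit_circle by simp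
  then show ?thesis unfolding christoffel_weight_def by simp
qed

lemma psi_0_zero_if_christoffel_weight_nonzero:
  assumes "x > 2" "christoffel_weight x \<noteq> 0"
  obtains z where "0 < z" "z < 1" "z + 1 / z = x" "psi 0 (complex_of_real z) = 0"
proof -
  obtain z where z: "0 < z" "z < 1" "z + 1 / z = x"
    using plus_inverse_gt_2_obtain[OF assms(1)] .
  have "summable (christoffel_term x)"
    using assms(2) unfolding christoffel_weight_def by (auto split: if_splits)
  moreover have "complex_of_real x = complex_of_real z + 1 / complex_of_real z"
    using z by (metis of_real_add of_real_divide of_real_1)
  ultimately have "psi 0 (complex_of_real z) = 0"
    using z by (intro psi_0_eq_0_if_summable) auto
  with z that show ?thesis by blast
qed

definition green_term :: "complex \<Rightarrow> complex \<Rightarrow> nat \<Rightarrow> complex" where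
  "green_term z w m = psi (Suc m) z * psi (Suc m) w / complex_of_real (g m)"

definition green_series :: "complex \<Rightarrow> complex \<Rightarrow> complex" where
  "green_series z w = (\<Sum>m. green_term z w m)"

lemma norm_green_term_le:
  assumes "norm z \<le> a" "a \<le> 1" "norm w \<le> 1"
  shows "norm (green_term z w m) \<le> Cpsi\<^sup>2 / g_lo * a ^ m"
proof -
  have "0 \<le> a" using assms(1) norm_ge_zero order_trans by blast
  have "norm (green_term z w m) = norm (psi (Suc m) z) * norm (psi (Suc m) w) / g m"
    unfolding green_term_def using c_pos[of m] by (simp add: norm_mult norm_divide)
  also have "\<dots> \<le> (a ^ m * Cpsi) * (1 ^ m * Cpsi) / g_lo"
    using norm_psi_Suc_le[OF assms(1,2)] norm_psi_Suc_le[OF assms(3) order_refl] g_lo_le[of m]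
      g_lo_pos Cpsi_pos \<open>0 \<le> a\<close>
    by (intro frac_le mult_mono) auto
  also have "\<dots> = Cpsi\<^sup>2 / g_lo * a ^ m" by (simp add: power2_eq_square)
  finally show ?thesis .
qed

lemma summable_norm_green_term:
  assumes "norm z \<le> a" "a < 1" "norm w \<le> 1"
  shows "summable (\<lambda>m. norm (green_term z w m))"
proof (rule summable_comparison_test'[where N=0])
  have "0 \<le> a" using assms(1) norm_ge_zero order_trans by blast
  then show "summable (\<lambda>m. Cpsi\<^sup>2 / g_lo * a ^ m)"
    using assms(2) by (intro summable_mult summable_geometric) auto
qed (use norm_green_term_le assms in auto)

lemma green_term_sums:
  assumes "norm z < 1" "norm w \<le> 1"
  shows "green_term z w sums green_series z w"
  unfolding green_series_def
  by (rule summable_sums[OF summable_norm_cancel[OF summable_norm_green_term[OF order_refl assms]]])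

lemma green_series_continuous_on:
  assumes "norm z < 1"
  shows "continuous_on (cball 0 1) (green_series z)"
proof -
  have "uniform_limit (cball 0 1) (\<lambda>n w. \<Sum>m<n. green_term z w m) (green_series z) sequentially"
    unfolding green_series_def[abs_def]
  proof (rule Weierstrass_m_test)
    show "norm (green_term z w m) \<le> Cpsi\<^sup>2 / g_lo * norm z ^ m" if "w \<in> cball 0 1" for m w
      using that assms by (intro norm_green_term_le) auto
    show "summable (\<lambda>m. Cpsi\<^sup>2 / g_lo * norm z ^ m)"
      using assms by (intro summable_mult summable_geometric) auto
  qed
  moreover have "continuous_on (cball 0 1) (\<lambda>w. green_term z w m)" for m
    unfolding green_term_def psi_Suc_eq_Phi using complex_g_nonzero[of m]
    by (intro continuous_intros Phi_continuous_on_cball) auto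
  ultimately show ?thesis
    by (intro uniform_limit_theorem[of _ "\<lambda>n w. \<Sum>m<n. green_term z w m"])
       (auto intro!: always_eventually continuous_intros)
qed

lemma psi_cross_LIMSEQ_0:
  assumes z: "norm z < 1" and w: "norm w \<le> 1"
  shows "(\<lambda>N. psi (Suc N) z * psi N w - psi N z * psi (Suc N) w) \<longlonglongrightarrow> 0"
proof (rule LIMSEQ_imp_Suc, rule Lim_null_comparison)
  show "\<forall>\<^sub>F N in sequentially. norm (psi (Suc (Suc N)) z * psi (Suc N) w - psi (Suc N) z * psi (Suc (Suc N)) w)
      \<le> 2 * Cpsi\<^sup>2 * norm z ^ N"
  proof (intro always_eventually allI)
    fix N
    have "norm z ^ Suc N \<le> norm z ^ N" using z by (intro power_decreasing) auto
    then have "norm z ^ Suc N * Cpsi \<le> norm z ^ N * Cpsi" using Cpsi_pos by (intro mult_right_mono) auto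
    then have bz: "norm (psi (Suc (Suc N)) z) \<le> norm z ^ N * Cpsi" "norm (psi (Suc N) z) \<le> norm z ^ N * Cpsi"
      using order.trans[OF norm_psi_Suc_le[of z "norm z" "Suc N"]] norm_psi_Suc_le[of z "norm z" N] z
      by auto
    have bw: "norm (psi (Suc m) w) \<le> Cpsi" for m
      using norm_psi_Suc_le[of w 1 m] w by simp
    have "norm (psi (Suc (Suc N)) z * psi (Suc N) w - psi (Suc N) z * psi (Suc (Suc N)) w)
        \<le> norm (psi (Suc (Suc N)) z) * norm (psi (Suc N) w) + norm (psi (Suc N) z) * norm (psi (Suc (Suc N)) w)"
      by (rule order.trans[OF norm_triangle_ineq4]) (simp add: norm_mult)
    also have "\<dots> \<le> (norm z ^ N * Cpsi) * Cpsi + (norm z ^ N * Cpsi) * Cpsi"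
      using bz bw Cpsi_pos by (intro add_mono mult_mono) auto
    finally show "norm (psi (Suc (Suc N)) z * psi (Suc N) w - psi (Suc N) z * psi (Suc (Suc N)) w)
        \<le> 2 * Cpsi\<^sup>2 * norm z ^ N"
      by (simp add: power2_eq_square mult_ac)
  qed
  show "(\<lambda>N. 2 * Cpsi\<^sup>2 * norm z ^ N) \<longlonglongrightarrow> 0"
    using z by (intro tendsto_mult_right_zero LIMSEQ_power_zero) auto
qed

text \<open>Green's formula for the solutions at \<open>z\<close> and \<open>w\<close>; the boundary term at infinity
  vanishes because \<open>\<psi>\<^sup>+\<^sub>n(z)\<close> decays geometrically.\<close>

lemma green_series_identity:
  assumes z: "z \<noteq> 0" "norm z < 1" and w: "w \<noteq> 0" "norm w \<le> 1"
  shows "((z + 1 / z) - (w + 1 / w)) * green_series z w = psi 0 z * psi 1 w - psi 1 z * psi 0 w"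
proof -
  let ?d = "(z + 1 / z) - (w + 1 / w)"
  have partial: "?d * (\<Sum>m<N. green_term z w m)
      = (psi (Suc N) z * psi N w - psi N z * psi (Suc N) w) - (psi 1 z * psi 0 w - psi 0 z * psi 1 w)" for N
    unfolding green_term_def
    by (rule three_term_green_identity[of "\<lambda>m. complex_of_real (g m)" "\<lambda>m. psi m z" _ "\<lambda>m. psi m w",
          OF complex_g_nonzero psi_recurrence[OF z(1)] psi_recurrence[OF w(1)]])
  have "(\<lambda>N. ?d * (\<Sum>m<N. green_term z w m)) \<longlonglongrightarrow> ?d * green_series z w"
    using green_term_sums[OF z(2) w(2)] unfolding sums_def by (intro tendsto_mult_left)
  moreover have "(\<lambda>N. ?d * (\<Sum>m<N. green_term z w m)) \<longlonglongrightarrow> 0 - (psi 1 z * psi 0 w - psi 0 z * psi 1 w)"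
    unfolding partial by (intro tendsto_diff psi_cross_LIMSEQ_0 tendsto_const z(2) w(2))
  ultimately have "?d * green_series z w = 0 - (psi 1 z * psi 0 w - psi 0 z * psi 1 w)"
    by (rule LIMSEQ_unique)
  then show ?thesis by simp
qed

lemma green_series_eq_difference_quotient:
  assumes z: "z \<noteq> 0" "norm z < 1" and p0: "psi 0 z = 0"
    and w: "w \<noteq> 0" "norm w < 1" "w \<noteq> z"
  shows "green_series z w = psi 1 z * ((psi 0 w - psi 0 z) / (w - z)) / (1 - 1 / (w * z))"
proof -
  have "norm (w * z) < 1 * 1"
    unfolding norm_mult using w z by (intro mult_strict_mono) auto
  then have "1 - 1 / (w * z) \<noteq> 0" using w z by (auto simp: field_simps)
  with w have d0: "(w - z) * (1 - 1 / (w * z)) \<noteq> 0" by simp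
  have "(z + 1 / z) - (w + 1 / w) = - ((w - z) * (1 - 1 / (w * z)))"
    using w z by (simp add: field_simps)
  then have "- ((w - z) * (1 - 1 / (w * z))) * green_series z w = - (psi 1 z * psi 0 w)"
    using green_series_identity[OF z, of w] w p0 by simp
  then have "green_series z w = psi 1 z * psi 0 w / ((w - z) * (1 - 1 / (w * z)))"
    using d0 by (simp add: eq_divide_eq mult.commute)
  then show ?thesis
    using p0 by simp
qed

text \<open>At a zero of \<open>psi 0\<close>, letting \<open>w \<rightarrow> z\<close> in Green's formula turns the difference
  quotient of \<open>psi 0\<close> into its derivative.\<close>

lemma green_series_diagonal:
  assumes z: "z \<noteq> 0" "norm z < 1" and p0: "psi 0 z = 0"
  shows "green_series z z = psi 1 z * deriv (psi 0) z / (1 - 1 / z\<^sup>2)"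
proof -
  let ?F = "\<lambda>w. psi 1 z * ((psi 0 w - psi 0 z) / (w - z)) / (1 - 1 / (w * z))"
  have "\<forall>\<^sub>F w in at z. w \<in> ball 0 1 - {0} - {z}"
    using z by (intro eventually_at_in_open) auto
  then have eq: "\<forall>\<^sub>F w in at z. ?F w = green_series z w"
    by (rule eventually_mono) (use green_series_eq_difference_quotient[OF z p0] in auto)
  have "(psi 0 has_field_derivative deriv (psi 0) z) (at z)"
    using psi_0_holomorphic z(1) by (intro holomorphic_derivI) auto
  then have dq: "((\<lambda>w. (psi 0 w - psi 0 z) / (w - z)) \<longlongrightarrow> deriv (psi 0) z) (at z)"
    by (simp add: has_field_derivative_iff)
  have "((\<lambda>w. 1 - 1 / (w * z)) \<longlongrightarrow> 1 - 1 / (z * z)) (at z)"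
    using z by (intro tendsto_intros) auto
  moreover have "1 - 1 / (z * z) \<noteq> 0"
  proof
    assume "1 - 1 / (z * z) = 0"
    then have "norm (z * z) = 1" using z by (simp add: field_simps)
    moreover have "norm (z * z) < 1 * 1" unfolding norm_mult using z by (intro mult_strict_mono) auto
    ultimately show False by simp
  qed
  ultimately have "(?F \<longlongrightarrow> psi 1 z * deriv (psi 0) z / (1 - 1 / (z * z))) (at z)"
    by (intro tendsto_divide tendsto_mult tendsto_const dq)
  then have "(green_series z \<longlongrightarrow> psi 1 z * deriv (psi 0) z / (1 - 1 / (z * z))) (at z)"
    using eq by (rule Lim_transform_eventually)
  moreover have "(green_series z \<longlongrightarrow> green_series z z) (at z)"
    using continuous_on_interior[OF green_series_continuous_on[OF z(2)], of z] z
    by (simp add: continuous_at)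
  ultimately show ?thesis
    by (auto dest: tendsto_unique[OF at_neq_bot] simp: power2_eq_square)
qed

lemma vpoly_at_psi_0_zero:
  assumes z: "0 < z" "z < 1" and p0: "psi 0 (complex_of_real z) = 0"
  shows "complex_of_real (vpoly m (z + 1 / z)) = psi m (complex_of_real z) / psi 1 (complex_of_real z)"
proof -
  have zc: "complex_of_real z \<noteq> 0" "norm (complex_of_real z) \<le> 1" using z by auto
  have x: "complex_of_real (z + 1 / z) = complex_of_real z + 1 / complex_of_real z" by simp
  show ?thesis
    using psi_eq_vpoly[OF zc(1) x p0, of m] psi_1_nonzero[OF zc x p0] by (simp add: field_simps)
qed

lemma christoffel_term_at_psi_0_zero:
  assumes z: "0 < z" "z < 1" and p0: "psi 0 (complex_of_real z) = 0"
  shows "complex_of_real (christoffel_term (z + 1 / z) m)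
      = complex_of_real (g 0) / (psi 1 (complex_of_real z))\<^sup>2 * green_term (complex_of_real z) (complex_of_real z) m"
  unfolding christoffel_term_def h_def green_term_def
  using vpoly_at_psi_0_zero[OF assms, of "Suc m"] c_pos[of 0] c_pos[of m]
  by (simp add: field_simps power2_eq_square)

lemma christoffel_summable_at_psi_0_zero:
  assumes z: "0 < z" "z < 1" and p0: "psi 0 (complex_of_real z) = 0"
  shows "summable (christoffel_term (z + 1 / z))"
proof -
  let ?c = "g 0 / (norm (psi 1 (complex_of_real z)))\<^sup>2"
  have "christoffel_term (z + 1 / z) m = ?c * norm (green_term (complex_of_real z) (complex_of_real z) m)" for m
    using arg_cong[OF christoffel_term_at_psi_0_zero[OF assms, of m], of norm]
      christoffel_term_nonneg[of "z + 1 / z" m] c_pos[of 0]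
    by (simp add: norm_mult norm_divide norm_power)
  then have "christoffel_term (z + 1 / z) = (\<lambda>m. ?c * norm (green_term (complex_of_real z) (complex_of_real z) m))"
    by (rule ext)
  then show ?thesis
    using z by (simp only:) (intro summable_mult summable_norm_green_term[of _ z], auto)
qed

lemma suminf_christoffel_at_psi_0_zero:
  assumes z: "0 < z" "z < 1" and p0: "psi 0 (complex_of_real z) = 0"
  shows "complex_of_real (suminf (christoffel_term (z + 1 / z)))
    = complex_of_real (g 0) * deriv (psi 0) (complex_of_real z)
      / (psi 1 (complex_of_real z) * (1 - 1 / (complex_of_real z)\<^sup>2))"
proof -
  define zc where "zc = complex_of_real z"
  have zc: "zc \<noteq> 0" "norm zc < 1" using z by (auto simp: zc_def)
  have "(\<lambda>m. complex_of_real (christoffel_term (z + 1 / z) m))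
      sums complex_of_real (suminf (christoffel_term (z + 1 / z)))"
    unfolding sums_of_real_iff by (rule summable_sums[OF christoffel_summable_at_psi_0_zero[OF assms]])
  moreover have "(\<lambda>m. complex_of_real (christoffel_term (z + 1 / z) m))
      sums (complex_of_real (g 0) / (psi 1 zc)\<^sup>2 * green_series zc zc)"
    unfolding christoffel_term_at_psi_0_zero[OF assms] zc_def
    using green_term_sums[of zc zc] zc unfolding zc_def by (intro sums_mult) auto
  ultimately have "complex_of_real (suminf (christoffel_term (z + 1 / z)))
      = complex_of_real (g 0) / (psi 1 zc)\<^sup>2 * green_series zc zc"
    by (rule sums_unique2)
  also have "\<dots> = complex_of_real (g 0) * deriv (psi 0) zc / (psi 1 zc * (1 - 1 / zc\<^sup>2))"
    unfolding green_series_diagonal[OF zc p0[folded zc_def]]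
    using psi_1_nonzero[of zc "z + 1 / z"] zc p0 unfolding zc_def
    by (simp add: field_simps power2_eq_square)
  finally show ?thesis unfolding zc_def .
qed

lemma christoffel_weight_at_psi_0_zero:
  assumes z: "0 < z" "z < 1" and p0: "psi 0 (complex_of_real z) = 0"
  shows "christoffel_weight (z + 1 / z) > 0"
    and "complex_of_real (christoffel_weight (z + 1 / z))
      = complex_of_real ((1 - \<beta>) / (1 - \<alpha>)) * complex_of_real ((z\<^sup>2 - 1) / z\<^sup>2)
        * psi 1 (complex_of_real z) / deriv (psi 0) (complex_of_real z)"
proof -
  have S: "summable (christoffel_term (z + 1 / z))"
    by (rule christoffel_summable_at_psi_0_zero[OF assms])
  then have weight: "christoffel_weight (z + 1 / z) = 1 / suminf (christoffel_term (z + 1 / z))"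
    unfolding christoffel_weight_def by simp
  show "christoffel_weight (z + 1 / z) > 0"
    unfolding weight using suminf_christoffel_ge_1[OF S] by simp
  show "complex_of_real (christoffel_weight (z + 1 / z))
      = complex_of_real ((1 - \<beta>) / (1 - \<alpha>)) * complex_of_real ((z\<^sup>2 - 1) / z\<^sup>2)
        * psi 1 (complex_of_real z) / deriv (psi 0) (complex_of_real z)"
    unfolding weight of_real_divide of_real_1 suminf_christoffel_at_psi_0_zero[OF assms]
    using z by (simp add: gam_def field_simps power2_eq_square)
qed

definition psi_zeros :: "real set" where
  "psi_zeros = {z. 0 < z \<and> z < 1 \<and> psi_plus q \<alpha> \<beta> (-1) (complex_of_real z) = 0}"

lemma mem_psi_zeros: "z \<in> psi_zeros \<longleftrightarrow> 0 < z \<and> z < 1 \<and> psi 0 (complex_of_real z) = 0"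
  unfolding psi_zeros_def psi_def by simp

lemma christoffel_weight_nonzero_imp_psi_zero:
  assumes "christoffel_weight x \<noteq> 0"
  obtains z where "z \<in> psi_zeros" "x = z + 1 / z \<or> x = - (z + 1 / z)"
proof (cases "x > 2")
  case True
  then show ?thesis
    using psi_0_zero_if_christoffel_weight_nonzero[OF True assms] that
    by (metis mem_psi_zeros)
next
  case False
  moreover have "\<not> \<bar>x\<bar> \<le> 2"
    using christoffel_weight_eq_0_if_abs_le_2 assms by blast
  ultimately have "- x > 2" by linarith
  moreover have "christoffel_weight (- x) \<noteq> 0"
    using assms christoffel_weight_uminus by simp
  ultimately show ?thesis
    using psi_0_zero_if_christoffel_weight_nonzero that
    by (metis mem_psi_zeros minus_minus)
qed

end

locale q_orthogonality = q_params +
  fixes M :: "real measure"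
  assumes M_prob_space: "prob_space M" and M_sets: "sets M = sets borel"
    and opoly_integrable: "\<And>m n. integrable M (\<lambda>x. opoly q \<alpha> \<beta> m x * opoly q \<alpha> \<beta> n x)"
    and opoly_orthogonal: "\<And>m n. (\<integral>x. opoly q \<alpha> \<beta> m x * opoly q \<alpha> \<beta> n x \<partial>M)
              = (if m = n then (\<Prod>j<n. gam q \<alpha> \<beta> j * gam q \<alpha> \<beta> (Suc j)) else 0)"
begin

lemma prod_gam_pairs: "(\<Prod>j<n. g j * g (Suc j)) = (\<Prod>j<n. g j)\<^sup>2 * h n"
proof (induction n)
  case (Suc n)
  then show ?case
    unfolding h_def using c_pos[of 0] c_pos[of n] by (simp add: field_simps power2_eq_square)
qed (simp add: h_0)

lemma vpoly_Suc_eq_opoly: "vpoly (Suc n) x = opoly q \<alpha> \<beta> n x / (\<Prod>j<n. g j)"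
  using opoly_eq_vpoly[of n x] c_pos by (simp add: prod_pos less_imp_neq[symmetric])

sublocale jacobi_measure g g_lo g_hi M
proof (intro jacobi_measure.intro jacobi_measure_axioms.intro)
  show "jacobi_recurrence g g_lo g_hi"
    by unfold_locales (rule g_lo_pos g_lo_le g_le_hi)+
  show "prob_space M" "sets M = sets borel"
    by (rule M_prob_space M_sets)+
  show "integrable M (\<lambda>x. vpoly m x * vpoly n x)" for m n
  proof (cases m; cases n)
    fix m' n' assume mn: "m = Suc m'" "n = Suc n'"
    have "(\<lambda>x. vpoly m x * vpoly n x)
        = (\<lambda>x. opoly q \<alpha> \<beta> m' x * opoly q \<alpha> \<beta> n' x / ((\<Prod>j<m'. g j) * (\<Prod>j<n'. g j)))"
      unfolding mn vpoly_Suc_eq_opoly by (simp add: fun_eq_iff)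
    then show ?thesis using opoly_integrable[of m' n'] by simp
  qed simp_all
  have "(\<Prod>j<n. g j) > 0" for n using c_pos by (simp add: prod_pos)
  then show "(\<integral>x. vpoly (Suc m) x * vpoly (Suc n) x \<partial>M) = (if m = n then h m else 0)" for m n
    unfolding vpoly_Suc_eq_opoly opoly_orthogonal[symmetric] prod_gam_pairs
    using opoly_orthogonal[of m n] by (auto simp: field_simps power2_eq_square prod_gam_pairs)
qed

text \<open>If \<open>\<psi>\<^sup>+\<^sub>-\<^sub>1\<close> vanished on \<open>(0,1)\<close>, every point of \<open>(2,\<infinity>)\<close> would be an atom.\<close>

lemma psi_0_nonzero_in_unit_interval: "\<exists>z\<in>{0<..<1}. psi 0 (complex_of_real z) \<noteq> 0"
proof (rule ccontr)
  assume "\<not> ?thesis"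
  then have "(\<lambda>z. z + 1 / z) ` {0<..<1} \<subseteq> {x. measure M {x} \<noteq> 0}"
    using christoffel_weight_at_psi_0_zero(1)
    by (force simp: measure_singleton_eq_christoffel_weight)
  then have "countable ((\<lambda>z. z + 1 / z) ` {0<..<(1::real)})"
    using M.countable_support countable_subset by blast
  then have "countable {0<..<(1::real)}"
    using countable_image_inj_on inj_on_plus_inverse by blast
  then show False
    using uncountable_open_interval[of 0 1] by simp
qed

lemma finite_psi_zeros: "finite psi_zeros"
proof (rule ccontr)
  assume inf: "infinite psi_zeros"
  have psi_0_iff_Phi_0: "psi 0 (complex_of_real z) = 0 \<longleftrightarrow> Phi 0 (complex_of_real z) = 0" if "z > 0" for z
    using psi_eq_Phi[of "complex_of_real z" 0] that by simp
  define K where "K = complex_of_real ` {0..1}"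
  have "complex_of_real ` psi_zeros \<subseteq> {w \<in> K. Phi 0 w = 0}"
    using psi_0_iff_Phi_0 by (auto simp: K_def mem_psi_zeros)
  moreover have "infinite (complex_of_real ` psi_zeros)"
    using inf finite_imageD[of complex_of_real psi_zeros] by (auto simp: inj_on_def)
  ultimately have "infinite {w \<in> K. Phi 0 w = 0}"
    using finite_subset by blast
  moreover have "compact K" "K \<subseteq> ball 0 2"
    unfolding K_def by (auto intro!: compact_continuous_image continuous_intros)
  ultimately have "Phi 0 constant_on ball 0 2"
    using holomorphic_compact_finite_zeros[OF Phi_holomorphic_ball open_ball connected_ball] by blast
  then obtain c where c: "\<And>w. w \<in> ball 0 2 \<Longrightarrow> Phi 0 w = c"
    unfolding constant_on_def by blast
  obtain z0 where "z0 \<in> psi_zeros"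
    using inf by (metis finite.emptyI ex_in_conv)
  then have "c = 0"
    using c[of "complex_of_real z0"] psi_0_iff_Phi_0[of z0] by (simp add: mem_psi_zeros)
  moreover obtain z1 where "z1 \<in> {0<..<1}" "psi 0 (complex_of_real z1) \<noteq> 0"
    using psi_0_nonzero_in_unit_interval by blast
  ultimately show False
    using c[of "complex_of_real z1"] psi_0_iff_Phi_0[of z1] by simp
qed

lemma discrete_part_eq_sum:
  "discrete_part M A = (\<Sum>z\<in>psi_zeros.
      christoffel_weight (z + 1 / z) * (indicator A (z + 1 / z) + indicator A (- (z + 1 / z))))"
proof -
  define Sp where "Sp = (\<lambda>z. z + 1 / z) ` psi_zeros"
  define Sm where "Sm = (\<lambda>z. - (z + 1 / z)) ` psi_zeros"
  have fin: "finite Sp" "finite Sm"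
    unfolding Sp_def Sm_def using finite_psi_zeros by simp_all
  have pos: "z + 1 / z > 0" if "z \<in> psi_zeros" for z
    using that unfolding mem_psi_zeros by (intro add_pos_pos) auto
  have "psi_zeros \<subseteq> {0<..<1}" by (auto simp: mem_psi_zeros)
  then have inj1: "inj_on (\<lambda>z. z + 1 / z) psi_zeros"
    by (rule inj_on_subset[OF inj_on_plus_inverse])
  have "inj_on (uminus \<circ> (\<lambda>z. z + 1 / z)) psi_zeros"
    by (intro comp_inj_on inj1) (auto intro: inj_onI)
  then have inj: "inj_on (\<lambda>z. z + 1 / z) psi_zeros" "inj_on (\<lambda>z. - (z + 1 / z)) psi_zeros"
    using inj1 by (simp_all add: o_def)
  have "discrete_part M A = (\<Sum>x\<in>Sp \<union> Sm. christoffel_weight x * indicator A x)"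
    unfolding discrete_part_def measure_singleton_eq_christoffel_weight
  proof (rule infsum_eq_sum_indicator)
    show "christoffel_weight x = 0" if "x \<notin> Sp \<union> Sm" for x
      using christoffel_weight_nonzero_imp_psi_zero[of x] that unfolding Sp_def Sm_def by blast
  qed (use fin in simp)
  also have "\<dots> = (\<Sum>x\<in>Sp. christoffel_weight x * indicator A x) + (\<Sum>x\<in>Sm. christoffel_weight x * indicator A x)"
  proof (intro sum.union_disjoint fin equals0I)
    fix x assume "x \<in> Sp \<inter> Sm"
    then obtain z1 z2 where "z1 \<in> psi_zeros" "z2 \<in> psi_zeros" "x = z1 + 1 / z1" "x = - (z2 + 1 / z2)"
      unfolding Sp_def Sm_def by blast
    then show False using pos[of z1] pos[of z2] by linarith
  qed
  also have "\<dots> = (\<Sum>z\<in>psi_zeros. christoffel_weight (z + 1 / z) * indicator A (z + 1 / z))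
      + (\<Sum>z\<in>psi_zeros. christoffel_weight (z + 1 / z) * indicator A (- (z + 1 / z)))"
    unfolding Sp_def Sm_def sum.reindex[OF inj(1)] sum.reindex[OF inj(2)]
    by (simp add: christoffel_weight_uminus[of "_ + 1 / _", simplified])
  finally show ?thesis
    by (simp add: sum.distrib[symmetric] distrib_left)
qed

lemma discrete_part_formula:
  "complex_of_real (discrete_part M A)
     = complex_of_real ((1 - \<beta>) / (1 - \<alpha>)) *
       (\<Sum>z\<in>psi_zeros. complex_of_real ((z\<^sup>2 - 1) / z\<^sup>2)
          * psi_plus q \<alpha> \<beta> 0 (complex_of_real z) / deriv (psi_plus q \<alpha> \<beta> (-1)) (complex_of_real z)
          * complex_of_real (indicator A (z + 1 / z) + indicator A (- (z + 1 / z))))"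
  unfolding discrete_part_eq_sum of_real_sum sum_distrib_left
proof (intro sum.cong refl)
  fix z assume "z \<in> psi_zeros"
  then have z: "0 < z" "z < 1" "psi 0 (complex_of_real z) = 0"
    by (simp_all add: mem_psi_zeros)
  have "psi 0 = psi_plus q \<alpha> \<beta> (-1)" "psi 1 = psi_plus q \<alpha> \<beta> 0"
    unfolding psi_def by simp_all
  then show "complex_of_real (christoffel_weight (z + 1 / z) * (indicator A (z + 1 / z) + indicator A (- (z + 1 / z))))
      = complex_of_real ((1 - \<beta>) / (1 - \<alpha>)) * (complex_of_real ((z\<^sup>2 - 1) / z\<^sup>2)
          * psi_plus q \<alpha> \<beta> 0 (complex_of_real z) / deriv (psi_plus q \<alpha> \<beta> (-1)) (complex_of_real z)
          * complex_of_real (indicator A (z + 1 / z) + indicator A (- (z + 1 / z))))"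
    unfolding of_real_mult[of "christoffel_weight _"] christoffel_weight_at_psi_0_zero(2)[OF z]
    by (simp only: mult_ac times_divide_eq_left times_divide_eq_right)
qed

end

theorem proposition2p12:
  fixes q \<alpha> \<beta> :: real and M :: "real measure"
  assumes "0 < q" "q < 1" "-1 < \<alpha>" "\<alpha> < 1" "\<beta> < 1"
    and "prob_space M" "sets M = sets borel"
    and "\<And>m n. integrable M (\<lambda>x. opoly q \<alpha> \<beta> m x * opoly q \<alpha> \<beta> n x)"
    and "\<And>m n. (\<integral>x. opoly q \<alpha> \<beta> m x * opoly q \<alpha> \<beta> n x \<partial>M)
              = (if m = n then (\<Prod>j<n. gam q \<alpha> \<beta> j * gam q \<alpha> \<beta> (Suc j)) else 0)"
  shows "finite {z::real. 0 < z \<and> z < 1 \<and> psi_plus q \<alpha> \<beta> (-1) (complex_of_real z) = 0}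
    \<and> (\<forall>A \<in> sets borel.
         complex_of_real (discrete_part M A)
         = complex_of_real ((1 - \<beta>) / (1 - \<alpha>)) *
           (\<Sum>z \<in> {z::real. 0 < z \<and> z < 1 \<and> psi_plus q \<alpha> \<beta> (-1) (complex_of_real z) = 0}.
              complex_of_real ((z^2 - 1) / z^2)
              * psi_plus q \<alpha> \<beta> 0 (complex_of_real z)
              / deriv (psi_plus q \<alpha> \<beta> (-1)) (complex_of_real z)
              * complex_of_real (indicator A (z + 1/z) + indicator A (- (z + 1/z)))))"
proof -
  interpret q_orthogonality q \<alpha> \<beta> M
    by (intro q_orthogonality.intro q_params.intro q_orthogonality_axioms.intro) (use assms in auto)
  show ?thesis
    using finite_psi_zeros discrete_part_formula unfolding psi_zeros_def by blast
qed

end
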